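(* Let $p>2$ be a prime and let $(A,+,\circ)$ be a strongly nilpotent brace of cardinality $p^n$ and nilpotency index $k$, where $k<p$ and $n+1<p$. Let $\gamma$ be a primitive root modulo $p^p$, $\xi=\gamma^{p^{p-1}}$, and define $a\cdot b=\sum_{i=0}^{p-2}\xi^{p-1-i}((\xi^i a)*b)$. Then for all $a,b,c\in A$, $$(a\cdot b)\cdot c-a\cdot(b\cdot c)=(b\cdot a)\cdot c-b\cdot(a\cdot c),$$ so (together with biadditivity of $\cdot$) $(A,+,\cdot)$ is a pre-Lie ring.
   Context: A (left) brace is a set $A$ with binary operations $+,\circ$ such that $(A,+)$ is an abelian group, $(A,\circ)$ is a group, and $a\circ(b+c)+a=a\circ b+a\circ c$ for all $a,b,c$. Write $a*b=a\circ b-a-b$. For additive subgroups $X,Y$, $X*Y$ is the additive subgroup generated by all $x*y$. Set $A^{[1]}=A$, $A^{[i+1]}=\sum_{j=1}^{i}A^{[j]}*A^{[i+1-j]}$. The brace is strongly nilpotent if $A^{[m]}=0$ for some $m$ and has nilpotency index $k$ if $A^{[k]}=0\neq A^{[k-1]}$. $ma$ denotes the $m$-fold additive multiple. A pre-Lie ring is an abelian group with a biadditive product satisfying the displayed identity. *)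

theory Defs
  imports "HOL-Number_Theory.Residue_Primitive_Roots"
begin

text \<open>A (left) brace on the whole type 'a: (UNIV,+) is the abelian group given by the type class
  ab_group_add, and circ is a second operation making UNIV a group and satisfying the brace law.\<close>

definition is_group_op :: "('a \<Rightarrow> 'a \<Rightarrow> 'a) \<Rightarrow> bool" where
  "is_group_op f \<longleftrightarrow> (\<forall>a b c. f (f a b) c = f a (f b c)) \<and>
     (\<exists>e. (\<forall>a. f e a = a \<and> f a e = a) \<and> (\<forall>a. \<exists>b. f a b = e \<and> f b a = e))"

definition brace :: "('a::ab_group_add \<Rightarrow> 'a \<Rightarrow> 'a) \<Rightarrow> bool" where
  "brace circ \<longleftrightarrow> is_group_op circ \<and>
     (\<forall>a b c. circ a (b + c) + a = circ a b + circ a c)"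

definition bstar :: "('a::ab_group_add \<Rightarrow> 'a \<Rightarrow> 'a) \<Rightarrow> 'a \<Rightarrow> 'a \<Rightarrow> 'a" where
  "bstar circ a b = circ a b - a - b"

definition add_subgroup :: "'a::ab_group_add set \<Rightarrow> bool" where
  "add_subgroup H \<longleftrightarrow> 0 \<in> H \<and> (\<forall>x\<in>H. \<forall>y\<in>H. x + y \<in> H) \<and> (\<forall>x\<in>H. - x \<in> H)"

definition add_gen :: "'a::ab_group_add set \<Rightarrow> 'a set" where
  "add_gen S = \<Inter>{H. add_subgroup H \<and> S \<subseteq> H}"

definition set_star :: "('a::ab_group_add \<Rightarrow> 'a \<Rightarrow> 'a) \<Rightarrow> 'a set \<Rightarrow> 'a set \<Rightarrow> 'a set" where
  "set_star circ X Y = add_gen {bstar circ x y | x y. x \<in> X \<and> y \<in> Y}"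

text \<open>sp circ i = A^[i] for i \<ge> 1 (sp circ 0 = A is an unused dummy value).
  A sum of additive subgroups is the subgroup generated by their union.\<close>
function sp :: "('a::ab_group_add \<Rightarrow> 'a \<Rightarrow> 'a) \<Rightarrow> nat \<Rightarrow> 'a set" where
  "sp circ 0 = UNIV"
| "sp circ (Suc 0) = UNIV"
| "sp circ (Suc (Suc i)) =
     add_gen (\<Union>j\<in>{1..Suc i}. set_star circ (sp circ j) (sp circ (Suc (Suc i) - j)))"
  by pat_completeness auto
termination
  by (relation "measure (\<lambda>(c, i). i)") auto

definition strongly_nilpotent :: "('a::ab_group_add \<Rightarrow> 'a \<Rightarrow> 'a) \<Rightarrow> bool" where
  "strongly_nilpotent circ \<longleftrightarrow> (\<exists>m. sp circ m = {0})"

definition nilpotency_index :: "('a::ab_group_add \<Rightarrow> 'a \<Rightarrow> 'a) \<Rightarrow> nat \<Rightarrow> bool" where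
  "nilpotency_index circ k \<longleftrightarrow> sp circ k = {0} \<and> sp circ (k - 1) \<noteq> {0}"

fun nmul :: "nat \<Rightarrow> 'a::ab_group_add \<Rightarrow> 'a" where
  "nmul 0 a = 0"
| "nmul (Suc m) a = a + nmul m a"

definition dotp :: "nat \<Rightarrow> nat \<Rightarrow> ('a::ab_group_add \<Rightarrow> 'a \<Rightarrow> 'a) \<Rightarrow> 'a \<Rightarrow> 'a \<Rightarrow> 'a" where
  "dotp p \<xi> circ a b = (\<Sum>i = 0..p - 2. nmul (\<xi> ^ (p - 1 - i)) (bstar circ (nmul (\<xi> ^ i) a) b))"

end

theory Submission
  imports Defs "HOL-Computational_Algebra.Polynomial"
begin

text \<open>If \<open>x(s, t)\<close> is a polynomial map \<open>\<nat>\<^sup>2 \<rightarrow> A\<close> whose monomials of degree \<open>d\<close> have coefficients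
  in \<open>A\<^bsup>[d]\<^esup>\<close>, then so is \<open>x(s, t) \<star> c\<close>: up to an error lying deeper in the filtration, \<open>x\<close> is a
  circle product of circle powers of its coefficients, and circle powers expand binomially,
  with \<open>j!\<close> invertible on \<open>A\<close> for \<open>j < k < p\<close>. As \<open>A\<^bsup>[k]\<^esup> = 0\<close> only degrees \<open>\<le> p - 2\<close> occur, and
  as \<open>\<xi>\<close> is a primitive \<open>(p - 1)\<close>-th root of unity modulo \<open>p\<^sup>n\<close>, the sum defining \<open>a \<cdot> b\<close>
  extracts \<open>p - 1\<close> times the coefficient of \<open>s\<close> in \<open>(s a) \<star> b\<close>. Extracting the coefficient of
  \<open>s t\<close> from \<open>circ (s a) (t b) \<star> c\<close> in two ways gives \<open>a \<cdot> (b \<cdot> c) = K(a, b) + (a \<cdot> b) \<cdot> c\<close>,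
  where \<open>K(a, b)\<close>, extracted from \<open>(s a + t b) \<star> c\<close>, is symmetric in \<open>a\<close> and \<open>b\<close>.\<close>

lemma nmul_add_left: "nmul (a + b) x = nmul a x + nmul b x"
  by (induction a) (simp_all add: add.assoc)

lemma nmul_zero_right [simp]: "nmul m (0::'a::ab_group_add) = 0"
  by (induction m) simp_all

lemma nmul_add_right: "nmul m (x + y) = nmul m x + nmul m (y::'a::ab_group_add)"
  by (induction m) (simp_all add: algebra_simps)

lemma additive_nmul: "additive (nmul m)"
  by unfold_locales (rule nmul_add_right)

lemma nmul_mult: "nmul (a * b) x = nmul a (nmul b x)"
  by (induction a) (simp_all add: nmul_add_left nmul_add_right)

lemma nmul_commute: "nmul a (nmul b x) = nmul b (nmul a x)"
  by (metis mult.commute nmul_mult)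

lemma nmul_sum_left: "nmul (sum f A) x = (\<Sum>i\<in>A. nmul (f i) x)"
  by (induction A rule: infinite_finite_induct) (simp_all add: nmul_add_left)

lemmas nmul_minus_right = additive.minus[OF additive_nmul]
lemmas nmul_sum_right = additive.sum[OF additive_nmul]

lemma (in additive) nmul: "f (nmul m x) = nmul m (f x)"
  by (induction m) (simp_all add: add zero)

lemma sum_constant_nmul: "(\<Sum>y\<in>A. x) = nmul (card A) x"
  by (induction A rule: infinite_finite_induct) simp_all

lemma nmul_card_UNIV:
  fixes x :: "'a::{ab_group_add,finite}"
  shows "nmul (card (UNIV::'a set)) x = 0"
proof -
  have inj: "inj (\<lambda>y::'a. y + x)" by (auto simp: inj_def)
  have surj: "range (\<lambda>y::'a. y + x) = UNIV"
    by (auto intro!: image_eqI[where x="_ - x"])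
  have "(\<Sum>y\<in>(UNIV::'a set). y) = (\<Sum>y\<in>range (\<lambda>y::'a. y + x). y)" using surj by simp
  also have "\<dots> = (\<Sum>y\<in>UNIV. y + x)" by (subst sum.reindex[OF inj]) (simp add: comp_def)
  also have "\<dots> = (\<Sum>y\<in>UNIV. y) + nmul (card (UNIV::'a set)) x"
    by (simp add: sum.distrib sum_constant_nmul)
  finally show ?thesis by simp
qed

lemma nmul_cong:
  assumes "\<And>y. nmul N y = (0::'a::ab_group_add)" and "[a = b] (mod N)"
  shows "nmul a x = nmul b (x::'a)"
proof -
  have mod: "nmul c x = nmul (c mod N) x" for c
  proof -
    have "nmul c x = nmul (N * (c div N) + c mod N) x" by simp
    also have "\<dots> = nmul (c mod N) x" by (simp only: nmul_add_left nmul_mult assms(1)) simp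
    finally show ?thesis .
  qed
  show ?thesis using assms(2) unfolding cong_def by (simp only: mod[of a] mod[of b])
qed

section \<open>A primitive \<open>(p - 1)\<close>-th root of unity modulo \<open>p ^ m\<close>\<close>

lemma cong_1_pow_prime:
  fixes x :: int
  assumes p: "prime (p::nat)" and j: "j \<ge> 1" and c: "[x = 1] (mod int p ^ j)"
  shows "[x ^ p = 1] (mod int p ^ Suc j)"
proof -
  have d1: "int p ^ j dvd x - 1" using c by (simp add: cong_iff_dvd_diff)
  have "int p dvd int p ^ j" using j by (simp add: dvd_power)
  then have cp: "[x = 1] (mod int p)" using c cong_dvd_modulus by blast
  have "[(\<Sum>i<p. x ^ i) = (\<Sum>i<p. 1)] (mod int p)"
    by (intro cong_sum cong_pow[of x 1, simplified] cp)
  then have "[(\<Sum>i<p. x ^ i) = 0] (mod int p)" by (simp add: cong_def)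
  then have d2: "int p dvd (\<Sum>i<p. x ^ i)" by (simp add: cong_0_iff)
  have "x ^ p - 1 = (x - 1) * (\<Sum>i<p. x ^ i)" by (rule power_diff_1_eq)
  moreover have "int p ^ j * int p dvd (x - 1) * (\<Sum>i<p. x ^ i)"
    using d1 d2 by (rule mult_dvd_mono)
  ultimately show ?thesis
    by (simp add: cong_iff_dvd_diff mult.commute)
qed

lemma cong_1_pow_prime_power:
  fixes x :: int
  assumes p: "prime (p::nat)" and c: "[x = 1] (mod int p)"
  shows "[x ^ (p ^ m) = 1] (mod int p ^ Suc m)"
proof (induction m)
  case 0 then show ?case using c by simp
next
  case (Suc m)
  have "[(x ^ (p ^ m)) ^ p = 1] (mod int p ^ Suc (Suc m))"
    by (rule cong_1_pow_prime[OF p _ Suc]) simp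
  then show ?case by (simp add: power_mult[symmetric] mult.commute)
qed

lemma ord_residue_primroot_prime_power:
  assumes "prime p" "m > 0" "residue_primroot (p ^ m) \<gamma>"
  shows "ord (p ^ m) \<gamma> = p ^ (m - 1) * (p - 1)"
  using assms totient_prime_power[of p m] by (simp add: residue_primroot_def)

lemma residue_primroot_pow_cong_1:
  assumes p: "prime p" "m > 0" and g: "residue_primroot (p ^ m) \<gamma>"
  shows "[(\<gamma> ^ (p ^ (m - 1))) ^ (p - 1) = 1] (mod p ^ m)"
  unfolding power_mult[symmetric] ord_divides
  using ord_residue_primroot_prime_power[OF assms] by simp

lemma pow_prime_cong_self:
  assumes "prime p"
  shows "[a ^ p = a] (mod p)"
proof (cases "p dvd a")
  case True
  then have "p dvd a ^ p" using assms by (metis dvd_power dvd_trans prime_gt_0_nat)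
  with True show ?thesis by (simp add: cong_def dvd_eq_mod_eq_0)
next
  case False
  have "a ^ p = a ^ (p - 1) * a"
    using assms by (metis Suc_diff_1 power_Suc2 prime_gt_0_nat)
  also have "[\<dots> = 1 * a] (mod p)" by (intro cong_mult fermat_theorem[OF assms False] cong_refl)
  finally show ?thesis by simp
qed

lemma pow_prime_power_cong_self:
  assumes "prime p"
  shows "[\<gamma> ^ (p ^ j) = \<gamma>] (mod p)"
proof (induction j)
  case (Suc j)
  have "\<gamma> ^ (p ^ Suc j) = (\<gamma> ^ (p ^ j)) ^ p" by (simp add: power_mult[symmetric] mult.commute)
  also have "[\<dots> = \<gamma> ^ p] (mod p)" by (intro cong_pow Suc)
  also have "[\<gamma> ^ p = \<gamma>] (mod p)" by (rule pow_prime_cong_self[OF assms])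
  finally show ?case .
qed simp

text \<open>Modulo \<open>p\<close> we have \<open>\<gamma> ^ (p ^ (m - 1)) = \<gamma>\<close>, and \<open>\<gamma> ^ e = 1\<close> modulo \<open>p\<close> would lift by
  \<open>cong_1_pow_prime_power\<close> to \<open>\<gamma> ^ (e * p ^ (m - 1)) = 1\<close> modulo \<open>p ^ m\<close>, against the order of \<open>\<gamma>\<close>.\<close>

lemma residue_primroot_pow_not_cong_1:
  assumes p: "prime p" "m > 0" and g: "residue_primroot (p ^ m) \<gamma>"
    and e: "0 < e" "e < p - 1"
  shows "\<not> [(\<gamma> ^ (p ^ (m - 1))) ^ e = 1] (mod p)"
proof
  assume "[(\<gamma> ^ (p ^ (m - 1))) ^ e = 1] (mod p)"
  moreover have "[(\<gamma> ^ (p ^ (m - 1))) ^ e = \<gamma> ^ e] (mod p)"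
    by (intro cong_pow pow_prime_power_cong_self p(1))
  ultimately have "[int (\<gamma> ^ e) = 1] (mod int p)"
    by (metis cong_int_iff cong_sym cong_trans of_nat_1)
  from cong_1_pow_prime_power[OF p(1) this, of "m - 1"]
  have "[int (\<gamma> ^ (e * p ^ (m - 1))) = int 1] (mod int (p ^ m))"
    using p(2) by (simp add: power_mult)
  then have "ord (p ^ m) \<gamma> dvd e * p ^ (m - 1)" by (simp only: cong_int_iff ord_divides)
  then have "p ^ (m - 1) * (p - 1) dvd p ^ (m - 1) * e"
    using ord_residue_primroot_prime_power[OF p g] by (simp add: mult.commute)
  then have "p - 1 dvd e" using p by (simp add: prime_gt_0_nat)
  then show False using e by (simp add: dvd_imp_le leD)
qed

lemma geometric_sum_cong_0:
  assumes p: "prime p" and y1: "[y ^ (p - 1) = 1] (mod p ^ m)" and y2: "\<not> [y = 1] (mod p)"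
  shows "[(\<Sum>i<p - 1. y ^ i) = 0] (mod p ^ m)"
proof -
  have i1: "[int y ^ (p - 1) = 1] (mod int p ^ m)"
    using y1 cong_int_iff[of "y ^ (p-1)" 1 "p^m"] by simp
  have i2: "\<not> int p dvd (int y - 1)"
    using y2 cong_int_iff[of y 1 p] by (simp add: cong_iff_dvd_diff)
  have cp: "coprime (int p ^ m) (int y - 1)"
    using prime_imp_coprime[OF _ i2] p by (simp add: prime_nat_iff_prime)
  have "int p ^ m dvd int y ^ (p - 1) - 1" using i1 by (simp add: cong_iff_dvd_diff)
  also have "int y ^ (p - 1) - 1 = (int y - 1) * (\<Sum>i<p - 1. int y ^ i)" by (rule power_diff_1_eq)
  finally have "int p ^ m dvd (\<Sum>i<p - 1. int y ^ i)"
    using cp coprime_dvd_mult_right_iff by blast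
  then have "int (p ^ m) dvd int (\<Sum>i<p - 1. y ^ i)" by simp
  then show ?thesis by (simp only: int_dvd_int_iff cong_0_iff)
qed

lemma power_geometric_sum_cong_0:
  assumes p: "prime p"
    and xp: "[\<xi> ^ (p - 1) = 1] (mod p ^ m)"
    and xn: "\<And>e. 0 < e \<Longrightarrow> e < p - 1 \<Longrightarrow> \<not> [\<xi> ^ e = 1] (mod p)"
    and d: "0 < d" "d < p - 1"
  shows "[(\<Sum>i<p-1. (\<xi> ^ d) ^ i) = 0] (mod p ^ m)"
proof (rule geometric_sum_cong_0[OF p])
  have "(\<xi> ^ d) ^ (p - 1) = (\<xi> ^ (p - 1)) ^ d" by (simp add: power_mult[symmetric] mult.commute)
  also have "[\<dots> = 1 ^ d] (mod p ^ m)" by (intro cong_pow xp)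
  finally show "[(\<xi> ^ d) ^ (p - 1) = 1] (mod p ^ m)" by simp
  show "\<not> [\<xi> ^ d = 1] (mod p)" using xn d by simp
qed

text \<open>Orthogonality of the characters \<open>s \<mapsto> s ^ \<alpha>\<close> of the cyclic group generated by \<open>\<xi>\<close>;
  this is what makes \<open>dotp\<close> extract the coefficient of \<open>s\<close>.\<close>

lemma power_character_sum_cong:
  assumes p: "prime p" "p > 2"
    and xp: "[\<xi> ^ (p - 1) = 1] (mod p ^ m)"
    and xn: "\<And>e. 0 < e \<Longrightarrow> e < p - 1 \<Longrightarrow> \<not> [\<xi> ^ e = 1] (mod p)"
    and a: "\<alpha> \<le> p - 2"
  shows "[(\<Sum>i=0..p-2. \<xi> ^ (p - 1 - i) * (\<xi> ^ i) ^ \<alpha>) = (if \<alpha> = 1 then p - 1 else 0)] (mod p ^ m)"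
proof -
  note geo = power_geometric_sum_cong_0[OF p(1) xp xn]
  have rng: "{0..p-2} = {..<p-1}" using p by auto
  show ?thesis
  proof (cases "\<alpha> = 0")
    case True
    have "(\<Sum>i<p-1. \<xi> ^ (p - 1 - i)) = (\<Sum>i<p-1. \<xi> ^ ((p - 1) - Suc i + 1))"
      by (intro sum.cong refl, rule arg_cong[where f="(^) \<xi>"]) auto
    also have "\<dots> = (\<Sum>i<p-1. \<xi> ^ (i + 1))" by (rule sum.nat_diff_reindex)
    also have "\<dots> = \<xi> * (\<Sum>i<p-1. \<xi> ^ i)" by (simp add: sum_distrib_left)
    also have "[\<dots> = \<xi> * 0] (mod p ^ m)" using geo[of 1] p(2) by (intro cong_mult cong_refl) simp
    finally show ?thesis using True rng by simp
  next
    case False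
    have "\<xi> ^ (p - 1 - i) * (\<xi> ^ i) ^ \<alpha> = \<xi> ^ (p - 1) * (\<xi> ^ (\<alpha> - 1)) ^ i" if "i < p - 1" for i
    proof -
      have "p - 1 - i + i * \<alpha> = (p - 1) + (\<alpha> - 1) * i"
        using that False by (cases \<alpha>) (auto simp: algebra_simps)
      then show ?thesis by (metis power_add power_mult)
    qed
    then have "(\<Sum>i<p-1. \<xi> ^ (p - 1 - i) * (\<xi> ^ i) ^ \<alpha>) = (\<Sum>i<p-1. \<xi> ^ (p - 1) * (\<xi> ^ (\<alpha> - 1)) ^ i)"
      by (intro sum.cong refl) simp
    also have "[\<dots> = (\<Sum>i<p-1. 1 * (\<xi> ^ (\<alpha> - 1)) ^ i)] (mod p ^ m)"
      by (intro cong_sum cong_mult xp cong_refl)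
    also have "[(\<Sum>i<p-1. 1 * (\<xi> ^ (\<alpha> - 1)) ^ i) = (if \<alpha> = 1 then p - 1 else 0)] (mod p ^ m)"
      using geo[of "\<alpha> - 1"] False a p(2) by (cases "\<alpha> = 1") auto
    finally show ?thesis using rng False by simp
  qed
qed

lemma residue_primroot_character_sum_cong:
  assumes p: "prime p" "p > 2" "m > 0" and g: "residue_primroot (p ^ m) \<gamma>" and a: "\<alpha> \<le> p - 2"
  shows "[(\<Sum>i=0..p-2. (\<gamma> ^ (p ^ (m - 1))) ^ (p - 1 - i) * ((\<gamma> ^ (p ^ (m - 1))) ^ i) ^ \<alpha>) =
    (if \<alpha> = 1 then p - 1 else 0)] (mod p ^ m)"
  using power_character_sum_cong[OF p(1,2) residue_primroot_pow_cong_1[OF p(1,3) g] _ a]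
    residue_primroot_pow_not_cong_1[OF p(1,3) g] by blast

section \<open>The filtration \<open>A\<^bsup>[i]\<^esup>\<close> of a left brace\<close>

lemma add_gen_subgroup: "add_subgroup (add_gen S)"
  unfolding add_gen_def add_subgroup_def by auto

lemma add_gen_incl: "S \<subseteq> add_gen S"
  unfolding add_gen_def by auto

lemma add_gen_least: "add_subgroup H \<Longrightarrow> S \<subseteq> H \<Longrightarrow> add_gen S \<subseteq> H"
  unfolding add_gen_def by auto

locale left_brace =
  fixes circ :: "'a::ab_group_add \<Rightarrow> 'a \<Rightarrow> 'a"
  assumes brace: "brace circ"
begin

abbreviation star (infixr "\<star>" 70) where "a \<star> b \<equiv> bstar circ a b"
abbreviation filt :: "nat \<Rightarrow> 'a set" where "filt \<equiv> sp circ"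

lemma circ_assoc: "circ (circ a b) c = circ a (circ b c)"
  using brace unfolding brace_def is_group_op_def by blast

lemma circ_add_right: "circ a (b + c) = circ a b + circ a c - a"
  using brace unfolding brace_def by (metis add_diff_cancel)

lemma circ_diff_right: "circ a (b - c) = circ a b - circ a c + a"
  using circ_add_right[of a "b - c" c] by (simp add: algebra_simps)

lemma circ_0_right [simp]: "circ a 0 = a"
  using circ_add_right[of a 0 0] by (simp add: algebra_simps)

lemma circ_group_0:
  "(\<forall>a. circ 0 a = a \<and> circ a 0 = a) \<and> (\<forall>a. \<exists>b. circ a b = 0 \<and> circ b a = 0)"
proof -
  obtain e where e: "(\<forall>a. circ e a = a \<and> circ a e = a) \<and> (\<forall>a. \<exists>b. circ a b = e \<and> circ b a = e)"
    using brace unfolding brace_def is_group_op_def by blast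
  moreover have "e = 0" using e circ_0_right[of e] by metis
  ultimately show ?thesis by blast
qed

lemma circ_0_left [simp]: "circ 0 a = a"
  using circ_group_0 by blast

lemma circ_inverse: "\<exists>b. circ a b = 0 \<and> circ b a = 0"
  using circ_group_0 by blast

lemma circ_eq_add_star: "circ a b = a + b + a \<star> b"
  by (simp add: bstar_def)

lemma star_additive: "additive ((\<star>) a)"
  by unfold_locales (simp add: bstar_def circ_add_right algebra_simps)

lemmas star_add_right = additive.add[OF star_additive]
lemmas star_diff_right = additive.diff[OF star_additive]
lemmas star_sum_right = additive.sum[OF star_additive]
lemmas star_nmul_right = additive.nmul[OF star_additive]
lemmas star_zero_right [simp] = additive.zero[OF star_additive]

lemma star_zero_left [simp]: "0 \<star> a = 0"
  by (simp add: bstar_def)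

lemma star_circ_left: "circ a b \<star> c = a \<star> (b \<star> c) + a \<star> c + b \<star> c"
proof -
  have "circ (circ a b) c = circ a (b + c + b \<star> c)"
    by (simp only: circ_assoc circ_eq_add_star[of b c])
  also have "\<dots> = circ a b + circ a c + circ a (b \<star> c) - a - a"
    by (simp add: circ_add_right)
  finally show ?thesis by (simp add: bstar_def algebra_simps)
qed

lemma filt_subgroup: "add_subgroup (filt i)"
proof (cases "i \<ge> 2")
  case True
  then obtain m where "i = Suc (Suc m)" by (metis add_2_eq_Suc le_Suc_ex)
  then show ?thesis by (simp only: sp.simps add_gen_subgroup)
next
  case False
  then have "i = 0 \<or> i = 1" by auto
  then have "filt i = UNIV" by auto
  then show ?thesis by (simp add: add_subgroup_def)
qed

lemma filt_zero [simp]: "0 \<in> filt i"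
  using filt_subgroup unfolding add_subgroup_def by blast

lemma filt_add: "x \<in> filt i \<Longrightarrow> y \<in> filt i \<Longrightarrow> x + y \<in> filt i"
  using filt_subgroup unfolding add_subgroup_def by blast

lemma filt_minus: "x \<in> filt i \<Longrightarrow> - x \<in> filt i"
  using filt_subgroup unfolding add_subgroup_def by blast

lemma filt_nmul: "x \<in> filt i \<Longrightarrow> nmul m x \<in> filt i"
  by (induction m) (simp_all add: filt_add)

lemma set_star_subset_filt:
  assumes "\<And>x y. x \<in> X \<Longrightarrow> y \<in> Y \<Longrightarrow> x \<star> y \<in> filt i"
  shows "set_star circ X Y \<subseteq> filt i"
  unfolding set_star_def using assms by (intro add_gen_least[OF filt_subgroup]) blast

lemma star_filt_pos:
  assumes "x \<in> filt i" "y \<in> filt j" "1 \<le> i" "1 \<le> j"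
  shows "x \<star> y \<in> filt (i + j)"
proof -
  define m where "m = i + j - 2"
  have m: "i + j = Suc (Suc m)" and j: "Suc (Suc m) - i = j"
    using assms(3,4) unfolding m_def by arith+
  have "x \<star> y \<in> {bstar circ x y |x y. x \<in> filt i \<and> y \<in> filt j}"
    using assms(1,2) by blast
  also have "\<dots> \<subseteq> set_star circ (filt i) (filt (Suc (Suc m) - i))"
    unfolding set_star_def j by (rule add_gen_incl)
  also have "\<dots> \<subseteq> (\<Union>l\<in>{1..Suc m}. set_star circ (filt l) (filt (Suc (Suc m) - l)))"
    by (rule UN_upper) (use m assms(3,4) in simp)
  also have "\<dots> \<subseteq> filt (Suc (Suc m))"
    by (simp only: sp.simps add_gen_incl)
  finally show ?thesis by (simp only: m)
qed

lemma filt_Suc_subset: "filt (Suc i) \<subseteq> filt i"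
proof (induction i rule: less_induct)
  case (less i)
  show ?case
  proof (cases "i \<ge> 2")
    case False
    then have "i = 0 \<or> i = 1" by auto
    then show ?thesis by auto
  next
    case True
    then obtain m where i: "i = Suc (Suc m)" by (metis add_2_eq_Suc le_Suc_ex)
    have "x \<star> y \<in> filt i" if l: "l \<in> {1..i}" and x: "x \<in> filt l" and y: "y \<in> filt (Suc i - l)"
      for l x y
    proof (cases "l < i")
      case True
      then have "y \<in> filt (i - l)" using less[of "i - l"] y l by (auto simp: Suc_diff_le)
      then show ?thesis using star_filt_pos[OF x] True l by fastforce
    next
      case False
      then have "x \<in> filt (i - 1)" "y \<in> filt 1" using less[of "i - 1"] x l i by auto
      then show ?thesis using star_filt_pos[of x "i - 1" y 1] i by simp
    qed
    then have "(\<Union>l\<in>{1..i}. set_star circ (filt l) (filt (Suc i - l))) \<subseteq> filt i"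
      by (intro UN_least set_star_subset_filt) blast
    moreover have "filt (Suc i) = add_gen (\<Union>l\<in>{1..i}. set_star circ (filt l) (filt (Suc i - l)))"
      unfolding i by (simp only: sp.simps)
    ultimately show ?thesis using add_gen_least[OF filt_subgroup] by simp
  qed
qed

lemma filt_antimono: "i \<le> j \<Longrightarrow> filt j \<subseteq> filt i"
  by (induction j rule: dec_induct) (use filt_Suc_subset in auto)

lemma filt_antimonoD: "x \<in> filt j \<Longrightarrow> i \<le> j \<Longrightarrow> x \<in> filt i"
  using filt_antimono by blast

lemma star_filt:
  assumes "x \<in> filt i" "y \<in> filt j"
  shows "x \<star> y \<in> filt (i + j)"
proof -
  have "x \<in> filt (max i 1)" "y \<in> filt (max j 1)"
    using assms by (cases i; cases j; simp)+
  then have "x \<star> y \<in> filt (max i 1 + max j 1)" by (rule star_filt_pos) auto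
  then show ?thesis by (rule filt_antimonoD) simp
qed

lemma star_filt_Suc: "y \<in> filt j \<Longrightarrow> x \<star> y \<in> filt (Suc j)"
  using star_filt[of x 1 y j] by simp

end

locale nilpotent_brace = left_brace +
  fixes k :: nat
  assumes filt_k: "filt k = {0}"
begin

lemma filt_vanish: "k \<le> j \<Longrightarrow> x \<in> filt j \<Longrightarrow> x = 0"
  using filt_antimono[of k j] filt_k by auto

end

lemma fact_mult_choose_eq_prod:
  "int (fact j * (m choose j)) = (\<Prod>i<j. int m - int i)"
proof -
  have "real_of_int (int (fact j * (m choose j))) = fact j * (real m gchoose j)"
    by (simp add: binomial_gbinomial)
  also have "\<dots> = (\<Prod>i = 0..<j. real m - of_nat i)" by (rule gbinomial_mult_fact)
  also have "\<dots> = real_of_int (\<Prod>i<j. int m - int i)" by (simp add: atLeast0LessThan)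
  finally show ?thesis by (simp only: of_int_eq_iff)
qed

lemma fact_mult_choose_int_poly:
  assumes j: "j \<ge> 1"
  shows "\<exists>c. \<forall>m. int (fact j * (m choose j)) = (\<Sum>i\<in>{1..j}. c i * int m ^ i)"
proof -
  define q :: "int poly" where "q = (\<Prod>i<j. [:- int i, 1:])"
  have pq: "poly q x = (\<Prod>i<j. x - int i)" for x by (simp add: q_def poly_prod)
  have dq: "degree q \<le> j"
    using degree_prod_sum_le[of "{..<j}" "\<lambda>i. [:- int i, 1:]"] unfolding q_def by simp
  have c0: "coeff q 0 = 0"
    using j by (simp add: poly_0_coeff_0[symmetric] pq)
  have "int (fact j * (m choose j)) = (\<Sum>i\<in>{1..j}. coeff q i * int m ^ i)" for m
  proof -
    have "int (fact j * (m choose j)) = (\<Sum>i\<le>degree q. coeff q i * int m ^ i)"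
      by (simp only: fact_mult_choose_eq_prod pq[symmetric] poly_altdef)
    also have "\<dots> = (\<Sum>i\<le>j. coeff q i * int m ^ i)"
      by (rule sum.mono_neutral_left) (use dq in \<open>auto simp: coeff_eq_0\<close>)
    also have "{..j} = insert 0 {1..j}" by auto
    finally show ?thesis by (simp add: c0)
  qed
  then show ?thesis by blast
qed

lemma fact_mult_choose_poly_cong:
  assumes N: "N > 0" and j: "j \<ge> 1"
  shows "\<exists>c. \<forall>m. [fact j * (m choose j) = (\<Sum>i\<in>{1..j}. c i * m ^ i)] (mod N)"
proof -
  obtain c where c: "\<And>m. int (fact j * (m choose j)) = (\<Sum>i\<in>{1..j}. c i * int m ^ i)"
    using fact_mult_choose_int_poly[OF j] by blast
  define c' where "c' i = nat (c i mod int N)" for i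
  have "[c i = int (c' i)] (mod int N)" for i
    unfolding c'_def using N by (simp add: cong_def)
  then have "[int (fact j * (m choose j)) = int (\<Sum>i\<in>{1..j}. c' i * m ^ i)] (mod int N)" for m
    unfolding c by (simp, intro cong_sum cong_mult cong_refl)
  then show ?thesis by (auto simp only: cong_int_iff)
qed

section \<open>Graded polynomial maps\<close>

definition eval_terms :: "(nat \<times> nat \<times> 'a::ab_group_add) list \<Rightarrow> nat \<Rightarrow> nat \<Rightarrow> 'a" where
  "eval_terms L s t = sum_list (map (\<lambda>(a, b, g). nmul (s ^ a * t ^ b) g) L)"

lemma eval_terms_Nil [simp]: "eval_terms [] s t = 0"
  by (simp add: eval_terms_def)

lemma eval_terms_Cons [simp]:
  "eval_terms ((a, b, g) # L) s t = nmul (s ^ a * t ^ b) g + eval_terms L s t"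
  by (simp add: eval_terms_def)

lemma eval_terms_append [simp]: "eval_terms (L1 @ L2) s t = eval_terms L1 s t + eval_terms L2 s t"
  by (simp add: eval_terms_def)

definition add_closed :: "(nat \<Rightarrow> nat \<Rightarrow> bool) \<Rightarrow> bool" where
  "add_closed S \<longleftrightarrow> (\<forall>a b a' b'. S a b \<longrightarrow> S a' b' \<longrightarrow> S (a + a') (b + b'))"

lemma add_closedD: "add_closed S \<Longrightarrow> S a b \<Longrightarrow> S a' b' \<Longrightarrow> S (a' + a) (b' + b)"
  unfolding add_closed_def by (metis add.commute)

lemma add_closed_mult:
  assumes "add_closed S" "S a b" "i \<ge> 1"
  shows "S (i * a) (i * b)"
  using assms(3)
proof (induction i rule: dec_induct)
  case (step i)
  then show ?case using add_closedD[OF assms(1) step.IH assms(2)] by simp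
qed (use assms(2) in simp)

context left_brace
begin

text \<open>In \<open>graded_poly e \<mu> S F\<close>, \<open>e\<close> is how much deeper in the filtration than its degree each
  monomial coefficient lies, \<open>\<mu>\<close> a uniform depth of all coefficients, and \<open>S\<close> the support.\<close>

definition graded_terms :: "nat \<Rightarrow> nat \<Rightarrow> (nat \<Rightarrow> nat \<Rightarrow> bool) \<Rightarrow> (nat \<times> nat \<times> 'a) list \<Rightarrow> bool" where
  "graded_terms e \<mu> S L \<longleftrightarrow> (\<forall>(a, b, g)\<in>set L. S a b \<and> g \<in> filt (e + a + b) \<and> g \<in> filt \<mu>)"

definition graded_poly :: "nat \<Rightarrow> nat \<Rightarrow> (nat \<Rightarrow> nat \<Rightarrow> bool) \<Rightarrow> (nat \<Rightarrow> nat \<Rightarrow> 'a) \<Rightarrow> bool" where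
  "graded_poly e \<mu> S F \<longleftrightarrow> (\<exists>L. F = eval_terms L \<and> graded_terms e \<mu> S L)"

lemma graded_terms_Nil [simp]: "graded_terms e \<mu> S []"
  by (simp add: graded_terms_def)

lemma graded_terms_Cons [simp]:
  "graded_terms e \<mu> S ((a, b, g) # L) \<longleftrightarrow>
     S a b \<and> g \<in> filt (e + a + b) \<and> g \<in> filt \<mu> \<and> graded_terms e \<mu> S L"
  by (simp add: graded_terms_def)

lemma graded_terms_append [simp]:
  "graded_terms e \<mu> S (L1 @ L2) \<longleftrightarrow> graded_terms e \<mu> S L1 \<and> graded_terms e \<mu> S L2"
  by (simp only: graded_terms_def set_append ball_Un)

lemma graded_polyI: "graded_terms e \<mu> S L \<Longrightarrow> (\<And>s t. F s t = eval_terms L s t) \<Longrightarrow> graded_poly e \<mu> S F"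
  unfolding graded_poly_def by blast

lemma graded_polyE:
  assumes "graded_poly e \<mu> S F"
  obtains L where "F = eval_terms L" "graded_terms e \<mu> S L"
  using assms unfolding graded_poly_def by blast

lemma graded_poly_eval_terms: "graded_terms e \<mu> S L \<Longrightarrow> graded_poly e \<mu> S (eval_terms L)"
  unfolding graded_poly_def by blast

lemma graded_poly_zero: "graded_poly e \<mu> S (\<lambda>s t. 0)"
  by (rule graded_polyI[of _ _ _ "[]"]) simp_all

lemma graded_poly_cong:
  assumes "graded_poly e \<mu> S F" "\<And>s t. G s t = F s t"
  shows "graded_poly e \<mu> S G"
proof -
  have "G = F" using assms(2) by (intro ext)
  then show ?thesis using assms(1) by simp
qed

lemma graded_poly_add:
  assumes "graded_poly e \<mu> S F" "graded_poly e \<mu> S G"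
  shows "graded_poly e \<mu> S (\<lambda>s t. F s t + G s t)"
proof -
  obtain L1 L2 where "F = eval_terms L1" "graded_terms e \<mu> S L1"
    and "G = eval_terms L2" "graded_terms e \<mu> S L2"
    using assms by (elim graded_polyE)
  then show ?thesis by (intro graded_polyI[of _ _ _ "L1 @ L2"]) simp_all
qed

lemma graded_poly_minus:
  assumes "graded_poly e \<mu> S F"
  shows "graded_poly e \<mu> S (\<lambda>s t. - F s t)"
proof -
  obtain L where L: "F = eval_terms L" "graded_terms e \<mu> S L"
    using assms by (elim graded_polyE)
  let ?L' = "map (\<lambda>(a, b, g). (a, b, - g)) L"
  have "graded_terms e \<mu> S ?L'" "- eval_terms L s t = eval_terms ?L' s t" for s t
    using L(2) by (induction L) (auto simp: filt_minus nmul_minus_right)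
  then show ?thesis using L(1) by (intro graded_polyI) auto
qed

lemma graded_poly_diff:
  "graded_poly e \<mu> S F \<Longrightarrow> graded_poly e \<mu> S G \<Longrightarrow> graded_poly e \<mu> S (\<lambda>s t. F s t - G s t)"
  using graded_poly_add[of e \<mu> S F "\<lambda>s t. - G s t"] graded_poly_minus[of e \<mu> S G] by simp

lemma graded_poly_sum:
  assumes "finite A" "\<And>i. i \<in> A \<Longrightarrow> graded_poly e \<mu> S (F i)"
  shows "graded_poly e \<mu> S (\<lambda>s t. \<Sum>i\<in>A. F i s t)"
  using assms by (induction A rule: finite_induct) (simp_all add: graded_poly_zero graded_poly_add)

lemma graded_terms_mono:
  assumes "graded_terms e \<mu> S L" "e' \<le> e" "\<mu>' \<le> \<mu>" "\<And>a b. S a b \<Longrightarrow> S' a b"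
  shows "graded_terms e' \<mu>' S' L"
  using assms(1)
proof (induction L)
  case (Cons x L)
  obtain a b g where x: "x = (a, b, g)" by (cases x)
  have "S a b" "g \<in> filt (e + a + b)" "g \<in> filt \<mu>" using Cons.prems x by auto
  then have "S' a b" "g \<in> filt (e' + a + b)" "g \<in> filt \<mu>'" using assms(2-4) filt_antimonoD by auto
  then show ?case using Cons.IH Cons.prems unfolding x by simp
qed simp

lemma graded_poly_mono:
  assumes "graded_poly e \<mu> S F" "e' \<le> e" "\<mu>' \<le> \<mu>" "\<And>a b. S a b \<Longrightarrow> S' a b"
  shows "graded_poly e' \<mu>' S' F"
proof -
  obtain L where "F = eval_terms L" "graded_terms e \<mu> S L"
    using assms(1) by (elim graded_polyE)
  then show ?thesis
    using graded_terms_mono[of e \<mu> S L e' \<mu>' S'] assms(2-4) unfolding graded_poly_def by blast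
qed

lemma graded_poly_monom:
  assumes "S a b" "g \<in> filt (e + a + b)" "g \<in> filt \<mu>"
  shows "graded_poly e \<mu> S (\<lambda>s t. nmul (s ^ a * t ^ b) g)"
  by (rule graded_polyI[of _ _ _ "[(a, b, g)]"]) (simp_all add: assms)

lemma graded_poly_monom_mult:
  assumes "graded_poly (e + a + b) \<mu> S F" "\<And>a' b'. S a' b' \<Longrightarrow> S' (a' + a) (b' + b)"
  shows "graded_poly e \<mu> S' (\<lambda>s t. nmul (s ^ a * t ^ b) (F s t))"
proof -
  obtain L where L: "F = eval_terms L" "graded_terms (e + a + b) \<mu> S L"
    using assms(1) by (elim graded_polyE)
  let ?L' = "map (\<lambda>(a', b', g). (a' + a, b' + b, g)) L"
  have "graded_terms e \<mu> S' ?L'"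
    using L(2) assms(2) by (induction L) (auto simp: add_ac)
  moreover have "nmul (s ^ a * t ^ b) (eval_terms L s t) = eval_terms ?L' s t" for s t
    by (induction L) (auto simp: nmul_add_right nmul_mult[symmetric] power_add algebra_simps)
  ultimately show ?thesis using L(1) by (intro graded_polyI) simp_all
qed

lemma graded_poly_star:
  assumes hx: "\<And>g j1 j2. g \<in> filt j1 \<Longrightarrow> g \<in> filt j2 \<Longrightarrow> graded_poly (ex + j1) (mx + j2) Sx (\<lambda>s t. X s t \<star> g)"
    and hz: "graded_poly ez mz Sz Z"
    and hS: "\<And>a b a' b'. Sz a b \<Longrightarrow> Sx a' b' \<Longrightarrow> So (a' + a) (b' + b)"
  shows "graded_poly (ex + ez) (mx + mz) So (\<lambda>s t. X s t \<star> Z s t)"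
proof -
  obtain L where L: "Z = eval_terms L" "graded_terms ez mz Sz L"
    using hz by (elim graded_polyE)
  have "graded_poly (ex + ez) (mx + mz) So (\<lambda>s t. X s t \<star> eval_terms L s t)"
    using L(2)
  proof (induction L)
    case Nil then show ?case by (simp add: graded_poly_zero)
  next
    case (Cons x L)
    obtain a b g where x: "x = (a, b, g)" by (cases x)
    have g: "Sz a b" "g \<in> filt (ez + a + b)" "g \<in> filt mz" "graded_terms ez mz Sz L"
      using Cons.prems x by auto
    have "graded_poly (ex + ez + a + b) (mx + mz) Sx (\<lambda>s t. X s t \<star> g)"
      using hx[OF g(2,3)] by (simp add: add.assoc)
    then have "graded_poly (ex + ez) (mx + mz) So (\<lambda>s t. nmul (s ^ a * t ^ b) (X s t \<star> g))"
      by (rule graded_poly_monom_mult) (simp add: hS g(1))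
    then show ?case using Cons.IH[OF g(4)] x
      by (simp add: star_add_right star_nmul_right graded_poly_add)
  qed
  then show ?thesis using L by simp
qed

end

lemma (in nilpotent_brace) graded_poly_vanish:
  assumes "graded_poly e \<mu> S F" "k \<le> \<mu>"
  shows "F s t = 0"
proof -
  obtain L where L: "F = eval_terms L" "graded_terms e \<mu> S L"
    using assms(1) by (elim graded_polyE)
  show ?thesis using L(2) unfolding L(1)
  proof (induction L)
    case (Cons x L)
    obtain a b g where x: "x = (a, b, g)" by (cases x)
    have "g = 0" using Cons.prems x by (intro filt_vanish[OF assms(2)]) auto
    then show ?case using Cons x by auto
  qed simp
qed

lemma binomial_sum_shift:
  fixes F :: "nat \<Rightarrow> 'a::ab_group_add"
  assumes "F (Suc R) = 0"
  shows "(\<Sum>j\<le>R. nmul (m choose j) (F j)) = F 0 + (\<Sum>j\<le>R. nmul (m choose Suc j) (F (Suc j)))"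
proof -
  have "(\<Sum>j\<le>R. nmul (m choose j) (F j)) = (\<Sum>j\<le>Suc R. nmul (m choose j) (F j))"
    using assms by simp
  also have "\<dots> = F 0 + (\<Sum>j\<le>R. nmul (m choose Suc j) (F (Suc j)))"
    by (subst sum.atMost_Suc_shift) simp
  finally show ?thesis .
qed

lemma binomial_sum_pascal:
  fixes F :: "nat \<Rightarrow> 'a::ab_group_add"
  assumes F: "F (Suc R) = 0"
  shows "(\<Sum>j\<le>R. nmul (Suc m choose j) (F j)) =
    (\<Sum>j\<le>R. nmul (m choose j) (F j)) + (\<Sum>j\<le>R. nmul (m choose j) (F (Suc j)))"
proof -
  have "(\<Sum>j\<le>R. nmul (Suc m choose j) (F j)) = F 0 + (\<Sum>j\<le>R. nmul (Suc m choose Suc j) (F (Suc j)))"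
    by (rule binomial_sum_shift[where F=F, OF F])
  also have "\<dots> = (F 0 + (\<Sum>j\<le>R. nmul (m choose Suc j) (F (Suc j)))) + (\<Sum>j\<le>R. nmul (m choose j) (F (Suc j)))"
    by (simp add: nmul_add_left sum.distrib add.assoc)
  also have "F 0 + (\<Sum>j\<le>R. nmul (m choose Suc j) (F (Suc j))) = (\<Sum>j\<le>R. nmul (m choose j) (F j))"
    by (rule binomial_sum_shift[where F=F, OF F, symmetric])
  finally show ?thesis .
qed

context left_brace
begin

primrec circ_pow :: "'a \<Rightarrow> nat \<Rightarrow> 'a" where
  "circ_pow g 0 = 0"
| "circ_pow g (Suc m) = circ g (circ_pow g m)"

lemma circ_circ_minus: "circ (circ u v) c - circ u v = circ u (circ v c - v) - u"
  by (simp add: circ_diff_right circ_assoc)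

lemma star_iter_filt: "g \<in> filt d \<Longrightarrow> c \<in> filt w \<Longrightarrow> ((\<star>) g ^^ i) c \<in> filt (i * d + w)"
proof (induction i)
  case (Suc i)
  then have "g \<star> ((\<star>) g ^^ i) c \<in> filt (d + (i * d + w))" by (intro star_filt) simp_all
  then show ?case by (simp add: algebra_simps)
qed simp

end

context nilpotent_brace
begin

lemma star_iter_vanish: "k \<le> R \<Longrightarrow> ((\<star>) g ^^ R) c = 0"
  using star_iter_filt[of g 1 c 0 R] filt_vanish[of "R * 1 + 0"] by simp

text \<open>The map \<open>c \<mapsto> circ a c - a = c + a \<star> c\<close> is an action of \<open>(A, circ)\<close> by additive maps, so
  for \<open>a = g\<^sup>m\<close> it is \<open>(id + (g \<star>))\<^sup>m\<close>; the binomial expansion is finite since \<open>(g \<star>)\<^sup>k = 0\<close>.\<close>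

lemma circ_pow_circ_binomial:
  assumes R: "k \<le> R"
  shows "circ (circ_pow g m) c - circ_pow g m = (\<Sum>j\<le>R. nmul (m choose j) (((\<star>) g ^^ j) c))"
proof (induction m)
  case 0
  have "(\<Sum>j\<le>R. nmul (0 choose j) (((\<star>) g ^^ j) c)) = (\<Sum>j\<le>R. if j = 0 then c else 0)"
    by (intro sum.cong refl) (auto simp: binomial_eq_0)
  then show ?case by simp
next
  case (Suc m)
  define X where "X = circ (circ_pow g m) c - circ_pow g m"
  have "circ (circ_pow g (Suc m)) c - circ_pow g (Suc m) = circ g X - g"
    by (simp add: X_def circ_circ_minus)
  also have "\<dots> = X + g \<star> X" by (simp add: circ_eq_add_star)
  also have "g \<star> X = (\<Sum>j\<le>R. nmul (m choose j) (((\<star>) g ^^ Suc j) c))"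
    unfolding X_def Suc by (simp add: star_sum_right star_nmul_right)
  also have "X + \<dots> = (\<Sum>j\<le>R. nmul (Suc m choose j) (((\<star>) g ^^ j) c))"
    unfolding X_def Suc
    by (rule binomial_sum_pascal[symmetric, where F="\<lambda>j. ((\<star>) g ^^ j) c"]) (use star_iter_vanish R in simp)
  finally show ?case .
qed

lemma circ_pow_star_binomial:
  assumes R: "k \<le> R"
  shows "circ_pow g m \<star> c = (\<Sum>j\<le>R. nmul (m choose (j + 1)) (((\<star>) g ^^ Suc j) c))"
proof -
  have "circ_pow g m \<star> c = (circ (circ_pow g m) c - circ_pow g m) - c"
    by (simp add: bstar_def)
  also have "\<dots> = (\<Sum>j\<le>R. nmul (m choose j) (((\<star>) g ^^ j) c)) - c"
    by (simp only: circ_pow_circ_binomial[OF R])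
  also have "(\<Sum>j\<le>R. nmul (m choose j) (((\<star>) g ^^ j) c)) =
      c + (\<Sum>j\<le>R. nmul (m choose Suc j) (((\<star>) g ^^ Suc j) c))"
    using binomial_sum_shift[where F="\<lambda>j. ((\<star>) g ^^ j) c"] star_iter_vanish[of "Suc R" g c] R by simp
  finally show ?thesis by simp
qed

lemma circ_pow_binomial:
  assumes R: "k \<le> R"
  shows "circ_pow g m = (\<Sum>j\<le>R. nmul (m choose Suc j) (((\<star>) g ^^ j) g))"
proof (induction m)
  case (Suc m)
  have "circ_pow g (Suc m) = circ_pow g m + (g + g \<star> circ_pow g m)"
    by (simp add: circ_eq_add_star algebra_simps)
  also have "g + g \<star> circ_pow g m = (\<Sum>j\<le>R. nmul (m choose j) (((\<star>) g ^^ j) g))"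
    using binomial_sum_shift[where F="\<lambda>j. ((\<star>) g ^^ j) g"] star_iter_vanish[of "Suc R" g g] R
    unfolding Suc by (simp add: star_sum_right star_nmul_right)
  also have "circ_pow g m + \<dots> = (\<Sum>j\<le>R. nmul (Suc m choose Suc j) (((\<star>) g ^^ j) g))"
    unfolding Suc by (simp add: nmul_add_left sum.distrib add.commute)
  finally show ?case .
qed simp

lemma nmul_minus_circ_pow:
  "nmul m g - circ_pow g m = - (\<Sum>j\<le>k. nmul (m choose (j + 2)) (((\<star>) g ^^ Suc j) g))"
proof -
  have "circ_pow g m = (\<Sum>j\<le>Suc k. nmul (m choose Suc j) (((\<star>) g ^^ j) g))"
    by (rule circ_pow_binomial) simp
  also have "\<dots> = nmul m g + (\<Sum>j\<le>k. nmul (m choose (j + 2)) (((\<star>) g ^^ Suc j) g))"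
    by (subst sum.atMost_Suc_shift) simp
  finally show ?thesis by simp
qed

end

text \<open>Here \<open>j!\<close> is a unit modulo the exponent \<open>N\<close> of \<open>(A, +)\<close> for \<open>j < k\<close>, so the binomial
  coefficients \<open>m choose j\<close> act on \<open>A\<close> as polynomials in \<open>m\<close> without constant term.\<close>

locale torsion_nilpotent_brace = nilpotent_brace +
  fixes N :: nat
  assumes tors: "\<And>x::'a. nmul N x = 0" and Npos: "N > 0"
    and coprime_fact: "\<And>j. j < k \<Longrightarrow> coprime (fact j) N"
begin

lemma nmul_choose_eq_poly:
  assumes "1 \<le> J" "J < k"
  obtains c u where "\<And>m (x::'a). nmul (m choose J) x = (\<Sum>i\<in>{1..J}. nmul (m ^ i) (nmul (c i) (nmul u x)))"
proof -
  obtain u where u: "[fact J * u = Suc 0] (mod N)"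
    using cong_solve_coprime_nat[OF coprime_fact[OF assms(2)]] by blast
  obtain c where c: "\<And>m. [fact J * (m choose J) = (\<Sum>i\<in>{1..J}. c i * m ^ i)] (mod N)"
    using fact_mult_choose_poly_cong[OF Npos assms(1)] by blast
  have "nmul (m choose J) x = (\<Sum>i\<in>{1..J}. nmul (m ^ i) (nmul (c i) (nmul u x)))" for m and x :: 'a
  proof -
    have u': "nmul (fact J * u) y = y" for y :: 'a
      using nmul_cong[where N=N, OF tors u] by simp
    have "nmul (m choose J) x = nmul (m choose J) (nmul (fact J * u) x)"
      by (simp only: u')
    also have "\<dots> = nmul (fact J * (m choose J)) (nmul u x)"
      by (simp only: nmul_mult[symmetric] ac_simps)
    also have "\<dots> = nmul (\<Sum>i\<in>{1..J}. c i * m ^ i) (nmul u x)"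
      by (rule nmul_cong[where N=N, OF tors c])
    also have "\<dots> = (\<Sum>i\<in>{1..J}. nmul (m ^ i * c i) (nmul u x))"
      by (simp add: nmul_sum_left mult.commute)
    finally show ?thesis by (simp only: nmul_mult)
  qed
  then show ?thesis by (rule that)
qed

lemma nmul_choose_monom_graded:
  assumes S: "add_closed S" "S a b" and \<mu>: "\<mu> \<ge> 1" and J: "J \<ge> 1"
    and f: "f \<in> filt (J * (e + a + b) + o1)" "f \<in> filt (J * \<mu> + o2)"
  shows "graded_poly (e + o1) (J * \<mu> + o2) S (\<lambda>s t. nmul ((s ^ a * t ^ b) choose J) f)"
proof (cases "k \<le> J")
  case True
  have "J \<le> J * \<mu>" using \<mu> by simp
  with True have "k \<le> J * \<mu> + o2" by linarith
  then have "f = 0" using f(2) by (rule filt_vanish)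
  then show ?thesis by (simp add: graded_poly_zero)
next
  case False
  then have "J < k" by simp
  then obtain c u
    where cu: "\<And>m (x::'a). nmul (m choose J) x = (\<Sum>i\<in>{1..J}. nmul (m ^ i) (nmul (c i) (nmul u x)))"
    using nmul_choose_eq_poly[OF J] by blast
  have pow: "(s ^ a * t ^ b) ^ i = s ^ (i * a) * t ^ (i * b)" for s t i :: nat
    by (simp only: power_mult_distrib power_mult[symmetric] mult.commute[of a i] mult.commute[of b i])
  have "graded_poly (e + o1) (J * \<mu> + o2) S
      (\<lambda>s t. \<Sum>i\<in>{1..J}. nmul (s ^ (i * a) * t ^ (i * b)) (nmul (c i) (nmul u f)))"
  proof (rule graded_poly_sum[OF finite_atLeastAtMost])
    fix i assume i: "i \<in> {1..J}"
    have "i * a \<le> J * a" "i * b \<le> J * b" "e \<le> J * e" using i J by simp_all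
    then have "e + o1 + i * a + i * b \<le> J * (e + a + b) + o1"
      unfolding distrib_left by linarith
    then have "nmul (c i) (nmul u f) \<in> filt (e + o1 + i * a + i * b)"
      using f(1) by (intro filt_nmul) (rule filt_antimonoD)
    moreover have "nmul (c i) (nmul u f) \<in> filt (J * \<mu> + o2)"
      using f(2) by (intro filt_nmul)
    moreover have "S (i * a) (i * b)"
      using add_closed_mult[OF S] i by simp
    ultimately show "graded_poly (e + o1) (J * \<mu> + o2) S
        (\<lambda>s t. nmul (s ^ (i * a) * t ^ (i * b)) (nmul (c i) (nmul u f)))"
      by (intro graded_poly_monom)
  qed
  then show ?thesis
    by (rule graded_poly_cong) (simp only: cu pow)
qed

lemma binomial_sum_graded:
  assumes S: "add_closed S" "S a b" and \<mu>: "\<mu> \<ge> 1" and j0: "j0 \<ge> 1"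
    and f: "\<And>j. j \<le> R \<Longrightarrow> f j \<in> filt ((j + j0) * (e + a + b) + o1) \<and> f j \<in> filt ((j + j0) * \<mu> + o2)"
  shows "graded_poly (e + o1) (j0 * \<mu> + o2) S (\<lambda>s t. \<Sum>j\<le>R. nmul ((s ^ a * t ^ b) choose (j + j0)) (f j))"
proof (intro graded_poly_sum finite_atMost)
  fix j assume "j \<in> {..R}"
  then have "graded_poly (e + o1) ((j + j0) * \<mu> + o2) S (\<lambda>s t. nmul ((s ^ a * t ^ b) choose (j + j0)) (f j))"
    using f j0 by (intro nmul_choose_monom_graded[OF S \<mu>]) auto
  then show "graded_poly (e + o1) (j0 * \<mu> + o2) S (\<lambda>s t. nmul ((s ^ a * t ^ b) choose (j + j0)) (f j))"
    by (rule graded_poly_mono) simp_all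
qed

lemma circ_pow_star_graded:
  assumes "add_closed S" "S a b" "\<mu> \<ge> 1" "g \<in> filt (e + a + b)" "g \<in> filt \<mu>" "c \<in> filt w1" "c \<in> filt w2"
  shows "graded_poly (e + w1) (\<mu> + w2) S (\<lambda>s t. circ_pow g (s ^ a * t ^ b) \<star> c)"
proof -
  have "graded_poly (e + w1) (1 * \<mu> + w2) S
      (\<lambda>s t. \<Sum>j\<le>k. nmul ((s ^ a * t ^ b) choose (j + 1)) (((\<star>) g ^^ Suc j) c))"
  proof (rule binomial_sum_graded[OF assms(1-3)])
    fix j
    show "((\<star>) g ^^ Suc j) c \<in> filt ((j + 1) * (e + a + b) + w1) \<and>
        ((\<star>) g ^^ Suc j) c \<in> filt ((j + 1) * \<mu> + w2)"
      using star_iter_filt[OF assms(4,6), of "Suc j"] star_iter_filt[OF assms(5,7), of "Suc j"] by simp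
  qed simp
  then show ?thesis by (simp add: circ_pow_star_binomial[of k])
qed

lemma circ_pow_defect_graded:
  assumes "add_closed S" "S a b" "\<mu> \<ge> 1" "g \<in> filt (e + a + b)" "g \<in> filt \<mu>"
  shows "graded_poly e (2 * \<mu>) S (\<lambda>s t. nmul (s ^ a * t ^ b) g - circ_pow g (s ^ a * t ^ b))"
proof -
  have "graded_poly (e + 0) (2 * \<mu> + 0) S
      (\<lambda>s t. \<Sum>j\<le>k. nmul ((s ^ a * t ^ b) choose (j + 2)) (((\<star>) g ^^ Suc j) g))"
  proof (rule binomial_sum_graded[OF assms(1-3)])
    fix j
    show "((\<star>) g ^^ Suc j) g \<in> filt ((j + 2) * (e + a + b) + 0) \<and>
        ((\<star>) g ^^ Suc j) g \<in> filt ((j + 2) * \<mu> + 0)"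
      using star_iter_filt[OF assms(4,4), of "Suc j"] star_iter_filt[OF assms(5,5), of "Suc j"]
      by (simp add: algebra_simps)
  qed simp
  then show ?thesis by (simp add: nmul_minus_circ_pow graded_poly_minus)
qed

end

context left_brace
begin

fun circ_prod :: "(nat \<times> nat \<times> 'a) list \<Rightarrow> nat \<Rightarrow> nat \<Rightarrow> 'a" where
  "circ_prod [] s t = 0"
| "circ_prod ((a, b, g) # L) s t = circ (circ_pow g (s ^ a * t ^ b)) (circ_prod L s t)"

text \<open>The partial sums of \<open>y = v - X \<star> y\<close>, i.e. of the solution of \<open>circ X y = X + v\<close>.\<close>

primrec star_series :: "'a \<Rightarrow> nat \<Rightarrow> 'a \<Rightarrow> 'a" where
  "star_series X 0 v = 0"
| "star_series X (Suc r) v = v - X \<star> star_series X r v"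

lemma star_series_graded:
  assumes hx: "\<And>g j1 j2. g \<in> filt j1 \<Longrightarrow> g \<in> filt j2 \<Longrightarrow>
      graded_poly (ex + j1) (mx + j2) Sx (\<lambda>s t. X s t \<star> g)"
    and hV: "graded_poly e m S V"
    and hS: "\<And>a b a' b'. S a b \<Longrightarrow> Sx a' b' \<Longrightarrow> S (a' + a) (b' + b)"
  shows "graded_poly e m S (\<lambda>s t. star_series (X s t) r (V s t))"
proof (induction r)
  case 0 then show ?case by (simp add: graded_poly_zero)
next
  case (Suc r)
  have "graded_poly (ex + e) (mx + m) S (\<lambda>s t. X s t \<star> star_series (X s t) r (V s t))"
    by (rule graded_poly_star[where X=X and Sx=Sx and Sz=S and So=S, OF hx Suc hS])
  then have "graded_poly e m S (\<lambda>s t. X s t \<star> star_series (X s t) r (V s t))"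
    by (rule graded_poly_mono) simp_all
  then show ?case using hV by (simp add: graded_poly_diff)
qed

end

context nilpotent_brace
begin

lemma circ_star_series:
  assumes R: "k \<le> R"
  shows "circ X (star_series X R v) = X + v"
proof -
  obtain X' where X': "circ X X' = 0" "circ X' X = 0" using circ_inverse by blast
  define y where "y = circ X' (X + v)"
  have Xy: "circ X y = X + v" unfolding y_def by (simp add: circ_assoc[symmetric] X')
  then have y: "y = v - X \<star> y" by (simp add: circ_eq_add_star algebra_simps)
  have "y - star_series X r v \<in> filt r" for r
  proof (induction r)
    case (Suc r)
    have "y - star_series X (Suc r) v = - (X \<star> (y - star_series X r v))"
      by (subst y) (simp add: star_diff_right algebra_simps)
    also have "\<dots> \<in> filt (Suc r)" by (intro filt_minus star_filt_Suc Suc)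
    finally show ?case .
  qed simp
  then have "star_series X R v = y" using filt_vanish[OF R] by (metis eq_iff_diff_eq_0)
  then show ?thesis using Xy by simp
qed

end

context torsion_nilpotent_brace
begin

lemma circ_prod_star_graded:
  assumes S: "add_closed S" and \<mu>: "\<mu> \<ge> 1" and L: "graded_terms e \<mu> S L"
    and c: "c \<in> filt w1" "c \<in> filt w2"
  shows "graded_poly (e + w1) (\<mu> + w2) S (\<lambda>s t. circ_prod L s t \<star> c)"
  using L c
proof (induction L arbitrary: c w1 w2)
  case Nil then show ?case by (simp add: graded_poly_zero)
next
  case (Cons x L)
  obtain a b g where x: "x = (a, b, g)" by (cases x)
  have h: "S a b" "g \<in> filt (e + a + b)" "g \<in> filt \<mu>" "graded_terms e \<mu> S L"
    using Cons.prems x by auto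
  let ?u = "\<lambda>s t. circ_pow g (s ^ a * t ^ b)"
  have u: "graded_poly (e + j1) (\<mu> + j2) S (\<lambda>s t. ?u s t \<star> h)" if "h \<in> filt j1" "h \<in> filt j2" for h j1 j2
    by (rule circ_pow_star_graded[OF S h(1) \<mu> h(2,3) that])
  have IH: "graded_poly (e + w1) (\<mu> + w2) S (\<lambda>s t. circ_prod L s t \<star> c)"
    by (rule Cons.IH[OF h(4) Cons.prems(2,3)])
  have "graded_poly (e + (e + w1)) (\<mu> + (\<mu> + w2)) S (\<lambda>s t. ?u s t \<star> (circ_prod L s t \<star> c))"
    by (rule graded_poly_star[where X="?u" and Sx=S and Sz=S and So=S, OF u IH add_closedD[OF S]])
  then have "graded_poly (e + w1) (\<mu> + w2) S (\<lambda>s t. ?u s t \<star> (circ_prod L s t \<star> c))"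
    by (rule graded_poly_mono) simp_all
  then have "graded_poly (e + w1) (\<mu> + w2) S
      (\<lambda>s t. ?u s t \<star> (circ_prod L s t \<star> c) + ?u s t \<star> c + circ_prod L s t \<star> c)"
    by (intro graded_poly_add IH u Cons.prems(2,3))
  then show ?case by (rule graded_poly_cong) (simp only: x circ_prod.simps star_circ_left)
qed

lemma circ_prod_defect_graded:
  assumes S: "add_closed S" and \<mu>: "\<mu> \<ge> 1" and L: "graded_terms e \<mu> S L"
  shows "graded_poly e (2 * \<mu>) S (\<lambda>s t. eval_terms L s t - circ_prod L s t)"
  using L
proof (induction L)
  case Nil then show ?case by (simp add: graded_poly_zero)
next
  case (Cons x L)
  obtain a b g where x: "x = (a, b, g)" by (cases x)
  have h: "S a b" "g \<in> filt (e + a + b)" "g \<in> filt \<mu>" "graded_terms e \<mu> S L"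
    using Cons.prems x by auto
  let ?u = "\<lambda>s t. circ_pow g (s ^ a * t ^ b)"
  have IH: "graded_poly e (2 * \<mu>) S (\<lambda>s t. eval_terms L s t - circ_prod L s t)"
    by (rule Cons.IH[OF h(4)])
  have "graded_poly e \<mu> S (\<lambda>s t. eval_terms L s t - circ_prod L s t)"
    by (rule graded_poly_mono[OF IH]) simp_all
  then have "graded_poly e \<mu> S (\<lambda>s t. eval_terms L s t - (eval_terms L s t - circ_prod L s t))"
    by (rule graded_poly_diff[OF graded_poly_eval_terms[OF h(4)]])
  then have P: "graded_poly e \<mu> S (circ_prod L)" by (rule graded_poly_cong) simp
  have "graded_poly (e + e) (\<mu> + \<mu>) S (\<lambda>s t. ?u s t \<star> circ_prod L s t)"
    by (rule graded_poly_star[where X="?u" and Z="circ_prod L" and ex=e and mx=\<mu> and ez=e and mz=\<mu>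
          and Sx=S and Sz=S and So=S,
          OF circ_pow_star_graded[OF S h(1) \<mu> h(2,3)] P add_closedD[OF S]])
  then have "graded_poly e (2 * \<mu>) S (\<lambda>s t. ?u s t \<star> circ_prod L s t)"
    by (rule graded_poly_mono) simp_all
  then have "graded_poly e (2 * \<mu>) S (\<lambda>s t. (nmul (s ^ a * t ^ b) g - ?u s t)
      + (eval_terms L s t - circ_prod L s t) - ?u s t \<star> circ_prod L s t)"
    by (intro graded_poly_add graded_poly_diff circ_pow_defect_graded[OF S h(1) \<mu> h(2,3)] IH)
  then show ?case
    by (rule graded_poly_cong) (simp only: x circ_prod.simps eval_terms_Cons, simp add: bstar_def)
qed

text \<open>Write \<open>x = circ P y\<close>, where \<open>P\<close> is the circle product of the circle powers of the
  monomials of \<open>x\<close>: then \<open>y\<close> lies twice as deep in the filtration as \<open>x\<close>, and the claim follows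
  by induction on \<open>k - \<mu>\<close> from \<open>circ P y \<star> c = P \<star> (y \<star> c) + P \<star> c + y \<star> c\<close>.\<close>

lemma graded_poly_star_left:
  assumes S: "add_closed S"
  shows "graded_poly e \<mu> S x \<Longrightarrow> \<mu> \<ge> 1 \<Longrightarrow> c \<in> filt w1 \<Longrightarrow> c \<in> filt w2 \<Longrightarrow>
    graded_poly (e + w1) (\<mu> + w2) S (\<lambda>s t. x s t \<star> c)"
proof (induction "k - \<mu>" arbitrary: \<mu> x c w1 w2 rule: less_induct)
  case less
  show ?case
  proof (cases "k \<le> \<mu>")
    case True
    then show ?thesis using graded_poly_vanish[OF less.prems(1)] by (simp add: graded_poly_zero)
  next
    case False
    obtain L where x: "x = eval_terms L" and L: "graded_terms e \<mu> S L"
      using less.prems(1) by (elim graded_polyE)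
    let ?P = "circ_prod L"
    have P: "graded_poly (e + j1) (\<mu> + j2) S (\<lambda>s t. ?P s t \<star> h)" if "h \<in> filt j1" "h \<in> filt j2" for h j1 j2
      by (rule circ_prod_star_graded[OF S less.prems(2) L that])
    define y where "y s t = star_series (?P s t) k (x s t - ?P s t)" for s t
    have "graded_poly e (2 * \<mu>) S y"
      unfolding y_def x
      by (rule star_series_graded[where X="?P" and ex=e and mx=\<mu> and Sx=S and S=S,
            OF P circ_prod_defect_graded[OF S less.prems(2) L] add_closedD[OF S]])
    then have y: "graded_poly (e + w1) (2 * \<mu> + w2) S (\<lambda>s t. y s t \<star> c)"
      using False less.prems by (intro less.hyps[of "2 * \<mu>"]) simp_all
    have "graded_poly (e + (e + w1)) (\<mu> + (2 * \<mu> + w2)) S (\<lambda>s t. ?P s t \<star> (y s t \<star> c))"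
      by (rule graded_poly_star[where X="?P" and Sx=S and Sz=S and So=S, OF P y add_closedD[OF S]])
    then have "graded_poly (e + w1) (\<mu> + w2) S (\<lambda>s t. ?P s t \<star> (y s t \<star> c))"
      by (rule graded_poly_mono) simp_all
    moreover have "graded_poly (e + w1) (\<mu> + w2) S (\<lambda>s t. y s t \<star> c)"
      by (rule graded_poly_mono[OF y]) simp_all
    ultimately have "graded_poly (e + w1) (\<mu> + w2) S (\<lambda>s t. ?P s t \<star> (y s t \<star> c) + ?P s t \<star> c + y s t \<star> c)"
      using P[OF less.prems(3,4)] by (intro graded_poly_add)
    moreover have "x s t = circ (?P s t) (y s t)" for s t
      unfolding y_def by (simp add: circ_star_series)
    ultimately show ?thesis by (metis (no_types, lifting) graded_poly_cong star_circ_left)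
  qed
qed

end

definition pos_deg :: "nat \<Rightarrow> nat \<Rightarrow> bool" where
  "pos_deg a b \<longleftrightarrow> 1 \<le> a + b"

definition deg_ge_2 :: "nat \<Rightarrow> nat \<Rightarrow> bool" where
  "deg_ge_2 a b \<longleftrightarrow> 2 \<le> a + b"

text \<open>All monomials except \<open>1\<close>, \<open>s\<close>, \<open>t\<close> and \<open>s t\<close>; \<open>bilin_extract\<close> below annihilates them.\<close>

definition non_bilinear :: "nat \<Rightarrow> nat \<Rightarrow> bool" where
  "non_bilinear a b \<longleftrightarrow> 2 \<le> a \<or> 2 \<le> b \<or> 3 \<le> a + b"

definition diagonal :: "nat \<Rightarrow> nat \<Rightarrow> bool" where
  "diagonal a b \<longleftrightarrow> a = b \<and> 1 \<le> a"

definition s_only :: "nat \<Rightarrow> nat \<Rightarrow> bool" where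
  "s_only a b \<longleftrightarrow> b = 0 \<and> 1 \<le> a"

lemma add_closed_pos_deg: "add_closed pos_deg"
  by (auto simp: add_closed_def pos_deg_def)

lemma add_closed_non_bilinear: "add_closed non_bilinear"
  by (auto simp: add_closed_def non_bilinear_def)

lemma add_closed_diagonal: "add_closed diagonal"
  by (auto simp: add_closed_def diagonal_def)

lemma add_closed_s_only: "add_closed s_only"
  by (auto simp: add_closed_def s_only_def)

context torsion_nilpotent_brace
begin

lemma pos_deg_star_graded:
  assumes X: "graded_poly 0 1 pos_deg X" and Z: "graded_poly ez mz Sz Z"
    and S: "\<And>a b a' b'. Sz a b \<Longrightarrow> pos_deg a' b' \<Longrightarrow> So (a' + a) (b' + b)"
  shows "graded_poly ez (1 + mz) So (\<lambda>s t. X s t \<star> Z s t)"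
proof -
  have "graded_poly (0 + j1) (1 + j2) pos_deg (\<lambda>s t. X s t \<star> g)" if "g \<in> filt j1" "g \<in> filt j2" for g j1 j2
    using graded_poly_star_left[OF add_closed_pos_deg X _ that] by simp
  from graded_poly_star[where X=X and ex=0 and mx=1 and Sx=pos_deg and Sz=Sz and So=So, OF this Z S]
  show ?thesis by simp
qed

lemma pos_deg_star_series_graded:
  assumes X: "graded_poly 0 1 pos_deg X" and V: "graded_poly 0 1 S V"
    and S: "\<And>a b a' b'. S a b \<Longrightarrow> pos_deg a' b' \<Longrightarrow> S (a' + a) (b' + b)"
  shows "graded_poly 0 1 S (\<lambda>s t. star_series (X s t) r (V s t))"
proof -
  have "graded_poly (0 + j1) (1 + j2) pos_deg (\<lambda>s t. X s t \<star> g)" if "g \<in> filt j1" "g \<in> filt j2" for g j1 j2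
    using graded_poly_star_left[OF add_closed_pos_deg X _ that] by simp
  then show ?thesis
    by (rule star_series_graded[where X=X and ex=0 and mx=1 and Sx=pos_deg and S=S, OF _ V S])
qed

lemma star_perturb_non_bilinear:
  assumes Y: "graded_poly 0 1 pos_deg Y" and Z: "graded_poly 0 1 non_bilinear Z"
  shows "graded_poly 0 1 non_bilinear (\<lambda>s t. (Y s t + Z s t) \<star> c - Y s t \<star> c)"
proof -
  have S: "non_bilinear (a' + a) (b' + b)" if "non_bilinear a b" "pos_deg a' b'" for a b a' b'
    using that by (auto simp: non_bilinear_def pos_deg_def)
  define z where "z s t = star_series (Y s t) k (Z s t)" for s t
  have z: "graded_poly 0 1 non_bilinear z"
    unfolding z_def using Y Z S by (rule pos_deg_star_series_graded)
  have zc: "graded_poly (0 + 1) (1 + 1) non_bilinear (\<lambda>s t. z s t \<star> c)"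
    by (rule graded_poly_star_left[OF add_closed_non_bilinear z]) simp_all
  have "graded_poly (0 + 1) (1 + (1 + 1)) non_bilinear (\<lambda>s t. Y s t \<star> (z s t \<star> c))"
    by (rule pos_deg_star_graded[OF Y zc]) (rule S)
  then have "graded_poly 0 1 non_bilinear (\<lambda>s t. Y s t \<star> (z s t \<star> c))"
    by (rule graded_poly_mono) simp_all
  moreover have "graded_poly 0 1 non_bilinear (\<lambda>s t. z s t \<star> c)"
    by (rule graded_poly_mono[OF zc]) simp_all
  ultimately have "graded_poly 0 1 non_bilinear (\<lambda>s t. Y s t \<star> (z s t \<star> c) + z s t \<star> c)"
    by (rule graded_poly_add)
  moreover have "Y s t + Z s t = circ (Y s t) (z s t)" for s t
    by (simp add: z_def circ_star_series)
  ultimately show ?thesis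
    by (simp add: star_circ_left)
qed

lemma pos_deg_add_diagonal_eq_circ:
  assumes X: "graded_poly 0 1 pos_deg X" and V: "graded_poly 0 1 diagonal V"
  obtains Z where "graded_poly 0 1 non_bilinear Z" "\<And>s t. X s t + V s t = circ (X s t) (V s t + Z s t)"
proof -
  define r where "r s t = star_series (X s t) k (V s t)" for s t
  have "graded_poly 0 1 deg_ge_2 V"
    by (rule graded_poly_mono[OF V]) (simp_all add: diagonal_def deg_ge_2_def)
  then have "graded_poly 0 1 deg_ge_2 r"
    unfolding r_def by (rule pos_deg_star_series_graded[OF X]) (simp add: deg_ge_2_def pos_deg_def)
  then have "graded_poly 0 (1 + 1) non_bilinear (\<lambda>s t. X s t \<star> r s t)"
    by (rule pos_deg_star_graded[OF X]) (auto simp: deg_ge_2_def pos_deg_def non_bilinear_def)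
  then have "graded_poly 0 1 non_bilinear (\<lambda>s t. X s t \<star> r s t)"
    by (rule graded_poly_mono) simp_all
  then have "graded_poly 0 1 non_bilinear (\<lambda>s t. - (X s t \<star> r s t))"
    by (rule graded_poly_minus)
  moreover have "X s t + V s t = circ (X s t) (V s t + - (X s t \<star> r s t))" for s t
    using circ_star_series[of "Suc k" "X s t" "V s t"] by (simp add: r_def)
  ultimately show ?thesis by (rule that)
qed

lemma star_add_defect_non_bilinear:
  assumes X: "graded_poly 0 1 pos_deg X" and V: "graded_poly 0 1 diagonal V"
  shows "graded_poly 0 1 non_bilinear (\<lambda>s t. (X s t + V s t) \<star> c - X s t \<star> c - V s t \<star> c)"
proof -
  obtain Z where Z: "graded_poly 0 1 non_bilinear Z"
    and XV: "\<And>s t. X s t + V s t = circ (X s t) (V s t + Z s t)"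
    using pos_deg_add_diagonal_eq_circ[OF X V] by blast
  define D where "D s t = (V s t + Z s t) \<star> c - V s t \<star> c" for s t
  have D: "graded_poly 0 1 non_bilinear D"
    unfolding D_def using graded_poly_mono[OF V] Z
    by (intro star_perturb_non_bilinear) (auto simp: diagonal_def pos_deg_def)
  have Vc: "graded_poly (0 + 1) (1 + 1) diagonal (\<lambda>s t. V s t \<star> c)"
    by (rule graded_poly_star_left[OF add_closed_diagonal V]) simp_all
  have "graded_poly (0 + 1) (1 + (1 + 1)) non_bilinear (\<lambda>s t. X s t \<star> (V s t \<star> c))"
    by (rule pos_deg_star_graded[OF X Vc]) (auto simp: diagonal_def pos_deg_def non_bilinear_def)
  then have XVc: "graded_poly 0 1 non_bilinear (\<lambda>s t. X s t \<star> (V s t \<star> c))"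
    by (rule graded_poly_mono) simp_all
  have "graded_poly 0 (1 + 1) non_bilinear (\<lambda>s t. X s t \<star> D s t)"
    by (rule pos_deg_star_graded[OF X D]) (auto simp: non_bilinear_def pos_deg_def)
  then have XD: "graded_poly 0 1 non_bilinear (\<lambda>s t. X s t \<star> D s t)"
    by (rule graded_poly_mono) simp_all
  have "graded_poly 0 1 non_bilinear (\<lambda>s t. X s t \<star> (V s t \<star> c) + X s t \<star> D s t + D s t)"
    using XVc XD D by (intro graded_poly_add)
  then show ?thesis
  proof (rule graded_poly_cong)
    fix s t
    have "(X s t + V s t) \<star> c = X s t \<star> ((V s t + Z s t) \<star> c) + X s t \<star> c + (V s t + Z s t) \<star> c"
      by (simp only: XV star_circ_left)
    then show "(X s t + V s t) \<star> c - X s t \<star> c - V s t \<star> c =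
        X s t \<star> (V s t \<star> c) + X s t \<star> D s t + D s t"
      by (simp add: D_def star_add_right star_diff_right algebra_simps)
  qed
qed

end

section \<open>Extracting linear and bilinear coefficients\<close>

definition linear_coeff :: "(nat \<times> nat \<times> 'a::ab_group_add) list \<Rightarrow> 'a" where
  "linear_coeff L = sum_list (map (\<lambda>(a, b, g). if a = 1 then g else 0) L)"

lemma linear_coeff_Nil [simp]: "linear_coeff [] = 0"
  by (simp add: linear_coeff_def)

lemma linear_coeff_Cons [simp]:
  "linear_coeff ((a, b, g) # L) = (if a = 1 then g else 0) + linear_coeff L"
  by (simp add: linear_coeff_def)

text \<open>The character sum hypothesis is \<open>power_character_sum_cong\<close> read modulo the exponent
  \<open>N\<close> of \<open>(A, +)\<close>; with it, \<open>lin_extract\<close> returns \<open>p - 1\<close> times the coefficient of \<open>s\<close> of a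
  polynomial in \<open>s\<close> of degree \<open>< k\<close>.\<close>

locale primitive_root_brace = torsion_nilpotent_brace +
  fixes p \<xi> :: nat
  assumes p_gt_2: "2 < p" and k_less_p: "k < p"
    and character_sum: "\<And>\<alpha>. \<alpha> \<le> p - 2 \<Longrightarrow>
      [(\<Sum>i=0..p-2. \<xi> ^ (p - 1 - i) * (\<xi> ^ i) ^ \<alpha>) = (if \<alpha> = 1 then p - 1 else 0)] (mod N)"
begin

definition lin_extract :: "(nat \<Rightarrow> 'a) \<Rightarrow> 'a" where
  "lin_extract f = (\<Sum>i=0..p-2. nmul (\<xi> ^ (p - 1 - i)) (f (\<xi> ^ i)))"

definition bilin_extract :: "(nat \<Rightarrow> nat \<Rightarrow> 'a) \<Rightarrow> 'a" where
  "bilin_extract F = lin_extract (\<lambda>s. lin_extract (\<lambda>t. F s t))"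

lemma dotp_eq_lin_extract: "dotp p \<xi> circ a b = lin_extract (\<lambda>s. nmul s a \<star> b)"
  by (simp add: dotp_def lin_extract_def)

lemma lin_extract_add: "lin_extract (\<lambda>s. f s + g s) = lin_extract f + lin_extract g"
  by (simp add: lin_extract_def nmul_add_right sum.distrib)

lemma additive_lin_extract:
  assumes "additive h"
  shows "lin_extract (\<lambda>s. h (f s)) = h (lin_extract f)"
  unfolding lin_extract_def by (simp add: additive.sum[OF assms] additive.nmul[OF assms])

lemma lin_extract_monom:
  assumes "g \<in> filt \<alpha>"
  shows "lin_extract (\<lambda>s. nmul (s ^ \<alpha>) g) = (if \<alpha> = 1 then nmul (p - 1) g else 0)"
proof (cases "\<alpha> \<le> p - 2")
  case True
  have "lin_extract (\<lambda>s. nmul (s ^ \<alpha>) g) = nmul (\<Sum>i=0..p-2. \<xi> ^ (p - 1 - i) * (\<xi> ^ i) ^ \<alpha>) g"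
    unfolding lin_extract_def by (simp add: nmul_mult nmul_sum_left)
  also have "\<dots> = nmul (if \<alpha> = 1 then p - 1 else 0) g"
    by (rule nmul_cong[OF tors character_sum[OF True]])
  finally show ?thesis by simp
next
  case False
  then have "g = 0" using k_less_p assms by (intro filt_vanish[of \<alpha>]) auto
  moreover have "\<alpha> \<noteq> 1" using False p_gt_2 by simp
  ultimately show ?thesis by (simp add: lin_extract_def)
qed

lemma lin_extract_const: "lin_extract (\<lambda>s. y) = 0"
  using lin_extract_monom[of y 0] by simp

lemma lin_extract_linear: "lin_extract (\<lambda>s. nmul s y) = nmul (p - 1) y"
  using lin_extract_monom[of y 1] by simp

lemma lin_extract_eval_terms_scaled:
  assumes "\<forall>(a, b, g)\<in>set L. g \<in> filt a"
  shows "lin_extract (\<lambda>s. eval_terms L (s * m) 1) = nmul (p - 1) (nmul m (linear_coeff L))"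
  using assms
proof (induction L)
  case Nil then show ?case by (simp add: lin_extract_const)
next
  case (Cons x L)
  obtain a b g where x: "x = (a, b, g)" by (cases x)
  have "nmul ((s * m) ^ a * 1 ^ b) g = nmul (s ^ a) (nmul (m ^ a) g)" for s
    by (simp add: nmul_mult power_mult_distrib)
  moreover have "nmul (m ^ a) g \<in> filt a" using Cons.prems x by (simp add: filt_nmul)
  ultimately have "lin_extract (\<lambda>s. nmul ((s * m) ^ a * 1 ^ b) g) =
      (if a = 1 then nmul (p - 1) (nmul m g) else 0)"
    by (simp add: lin_extract_monom)
  then show ?case
    using Cons x by (simp add: lin_extract_add nmul_add_right)
qed

lemma bilin_extract_add: "bilin_extract (\<lambda>s t. F s t + G s t) = bilin_extract F + bilin_extract G"
  unfolding bilin_extract_def by (simp add: lin_extract_add)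

lemma bilin_extract_swap: "bilin_extract (\<lambda>s t. F t s) = bilin_extract F"
proof -
  have "bilin_extract (\<lambda>s t. F t s) =
      (\<Sum>i=0..p-2. \<Sum>j=0..p-2. nmul (\<xi> ^ (p - 1 - i)) (nmul (\<xi> ^ (p - 1 - j)) (F (\<xi> ^ j) (\<xi> ^ i))))"
    unfolding bilin_extract_def lin_extract_def by (simp add: nmul_sum_right)
  also have "\<dots> = (\<Sum>j=0..p-2. \<Sum>i=0..p-2. nmul (\<xi> ^ (p - 1 - i)) (nmul (\<xi> ^ (p - 1 - j)) (F (\<xi> ^ j) (\<xi> ^ i))))"
    by (rule sum.swap)
  also have "\<dots> = bilin_extract F"
    unfolding bilin_extract_def lin_extract_def by (simp add: nmul_sum_right nmul_commute)
  finally show ?thesis .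
qed

lemma bilin_extract_monom:
  assumes "g \<in> filt a" "g \<in> filt b"
  shows "bilin_extract (\<lambda>s t. nmul (s ^ a * t ^ b) g) =
    (if a = 1 \<and> b = 1 then nmul (p - 1) (nmul (p - 1) g) else 0)"
proof -
  have "lin_extract (\<lambda>t. nmul (s ^ a * t ^ b) g) = (if b = 1 then nmul (p - 1) (nmul (s ^ a) g) else 0)" for s
    using lin_extract_monom[of "nmul (s ^ a) g" b] assms(2)
    by (simp add: filt_nmul nmul_mult mult.commute)
  then have "bilin_extract (\<lambda>s t. nmul (s ^ a * t ^ b) g) =
      (if b = 1 then nmul (p - 1) (lin_extract (\<lambda>s. nmul (s ^ a) g)) else 0)"
    unfolding bilin_extract_def by (simp add: additive_lin_extract[OF additive_nmul] lin_extract_const)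
  then show ?thesis using lin_extract_monom[OF assms(1)] by auto
qed

lemma bilin_extract_non_bilinear:
  assumes "graded_poly e \<mu> non_bilinear F"
  shows "bilin_extract F = 0"
proof -
  obtain L where L: "F = eval_terms L" "graded_terms e \<mu> non_bilinear L"
    using assms by (elim graded_polyE)
  show ?thesis using L(2) unfolding L(1)
  proof (induction L)
    case Nil then show ?case by (simp add: bilin_extract_def lin_extract_const)
  next
    case (Cons x L)
    obtain a b g where x: "x = (a, b, g)" by (cases x)
    have "non_bilinear a b" "g \<in> filt (e + a + b)" using Cons.prems x by auto
    then have "bilin_extract (\<lambda>s t. nmul (s ^ a * t ^ b) g) = 0"
      by (subst bilin_extract_monom) (auto simp: non_bilinear_def intro: filt_antimonoD)
    then show ?case using Cons x by (simp add: bilin_extract_add)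
  qed
qed

lemma bilin_extract_eval_terms_diag:
  assumes "\<forall>(a, b, g)\<in>set L. g \<in> filt a"
  shows "bilin_extract (\<lambda>s t. eval_terms L (s * t) 1) = nmul (p - 1) (nmul (p - 1) (linear_coeff L))"
proof -
  have "lin_extract (\<lambda>t. eval_terms L (s * t) 1) = nmul (p - 1) (nmul (s ^ 1) (linear_coeff L))" for s
    using lin_extract_eval_terms_scaled[OF assms, of s] by (simp add: mult.commute)
  then show ?thesis
    unfolding bilin_extract_def
    by (simp add: additive_lin_extract[OF additive_nmul] lin_extract_linear)
qed

end

section \<open>The pre-Lie identity\<close>

context left_brace
begin

lemma graded_terms_coeff_filt:
  assumes "graded_terms e \<mu> S L"
  shows "\<forall>(a, b, g)\<in>set L. g \<in> filt a"
proof clarify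
  fix a b g assume "(a, b, g) \<in> set L"
  then have "g \<in> filt (e + a + b)" using assms unfolding graded_terms_def by blast
  then show "g \<in> filt a" by (rule filt_antimonoD) simp
qed

lemma linear_coeff_filt: "graded_terms 1 \<mu> s_only L \<Longrightarrow> linear_coeff L \<in> filt 2"
proof (induction L)
  case (Cons x L)
  obtain a b g where x: "x = (a, b, g)" by (cases x)
  have "g \<in> filt (1 + a + b)" "graded_terms 1 \<mu> s_only L" using Cons.prems x by auto
  then have "a = 1 \<longrightarrow> g \<in> filt 2" using filt_antimonoD[of g "1 + a + b" 2] by auto
  then show ?case using Cons.IH[OF \<open>graded_terms 1 \<mu> s_only L\<close>] x by (auto intro: filt_add)
qed simp

lemma nmul_eval_terms_s_only:
  assumes "graded_terms 1 \<mu> s_only L"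
  shows "graded_poly 0 1 non_bilinear (\<lambda>s t. nmul t (eval_terms L s 1) - nmul (s * t) (linear_coeff L))"
  using assms
proof (induction L)
  case Nil then show ?case by (simp add: graded_poly_zero)
next
  case (Cons x L)
  obtain a b g where x: "x = (a, b, g)" by (cases x)
  have h: "b = 0" "1 \<le> a" "g \<in> filt (1 + a)" "graded_terms 1 \<mu> s_only L"
    using Cons.prems x by (auto simp: s_only_def)[3] (use Cons.prems x in simp)
  have "graded_poly 0 1 non_bilinear
      (\<lambda>s t. (if a = 1 then 0 else nmul (s ^ a * t ^ 1) g)
        + (nmul t (eval_terms L s 1) - nmul (s * t) (linear_coeff L)))"
  proof (intro graded_poly_add Cons.IH[OF h(4)])
    show "graded_poly 0 1 non_bilinear (\<lambda>s t. if a = 1 then 0 else nmul (s ^ a * t ^ 1) g)"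
    proof (cases "a = 1")
      case False
      then have "graded_poly 0 1 non_bilinear (\<lambda>s t. nmul (s ^ a * t ^ 1) g)"
        using h(2,3) by (intro graded_poly_monom) (auto simp: non_bilinear_def add.commute)
      then show ?thesis using False by simp
    qed (simp add: graded_poly_zero)
  qed
  then show ?case
    by (rule graded_poly_cong) (auto simp: x h(1) nmul_add_right nmul_mult[symmetric] mult.commute)
qed

end

context primitive_root_brace
begin

lemma star_nmul_split:
  obtains e where "e \<in> filt 2" "dotp p \<xi> circ a b = nmul (p - 1) e"
    "graded_poly 0 1 non_bilinear (\<lambda>s t. nmul s a \<star> nmul t b - nmul (s * t) e)"
proof -
  have "graded_poly 0 1 s_only (\<lambda>s t. nmul (s ^ 1 * t ^ 0) a)"
    by (rule graded_poly_monom) (simp_all add: s_only_def)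
  then have "graded_poly (0 + 1) (1 + 1) s_only (\<lambda>s t. nmul s a \<star> b)"
    by (intro graded_poly_star_left[OF add_closed_s_only]) simp_all
  then have "graded_poly 1 2 s_only (\<lambda>s t. nmul s a \<star> b)" by (simp add: numeral_2_eq_2)
  then obtain L where L: "(\<lambda>s t. nmul s a \<star> b) = eval_terms L" "graded_terms 1 2 s_only L"
    by (elim graded_polyE)
  then have ab: "nmul s a \<star> b = eval_terms L s 1" for s
    by (metis (no_types, lifting))
  show ?thesis
  proof
    show "linear_coeff L \<in> filt 2" by (rule linear_coeff_filt[OF L(2)])
    show "dotp p \<xi> circ a b = nmul (p - 1) (linear_coeff L)"
      using lin_extract_eval_terms_scaled[OF graded_terms_coeff_filt[OF L(2)], of 1]
      by (simp add: dotp_eq_lin_extract ab)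
    show "graded_poly 0 1 non_bilinear (\<lambda>s t. nmul s a \<star> nmul t b - nmul (s * t) (linear_coeff L))"
      using nmul_eval_terms_s_only[OF L(2)] by (simp add: star_nmul_right ab)
  qed
qed

lemma bilin_extract_nmul_mult_star:
  "bilin_extract (\<lambda>s t. nmul (s * t) e \<star> c) = dotp p \<xi> circ (nmul (p - 1) e) c"
proof -
  have "graded_poly 0 1 s_only (\<lambda>s t. nmul (s ^ 1 * t ^ 0) e)"
    by (rule graded_poly_monom) (simp_all add: s_only_def)
  then have "graded_poly (0 + 1) (1 + 1) s_only (\<lambda>s t. nmul s e \<star> c)"
    by (intro graded_poly_star_left[OF add_closed_s_only]) simp_all
  then have "graded_poly 1 2 s_only (\<lambda>s t. nmul s e \<star> c)" by (simp add: numeral_2_eq_2)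
  then obtain L where L: "(\<lambda>s t. nmul s e \<star> c) = eval_terms L" "graded_terms 1 2 s_only L"
    by (elim graded_polyE)
  then have ec: "nmul s e \<star> c = eval_terms L s 1" for s
    by (metis (no_types, lifting))
  have bounded: "\<forall>(a, b, g)\<in>set L. g \<in> filt a" by (rule graded_terms_coeff_filt[OF L(2)])
  have "bilin_extract (\<lambda>s t. nmul (s * t) e \<star> c) = nmul (p - 1) (nmul (p - 1) (linear_coeff L))"
    using bilin_extract_eval_terms_diag[OF bounded] by (simp add: ec)
  also have "\<dots> = lin_extract (\<lambda>s. eval_terms L (s * (p - 1)) 1)"
    by (rule lin_extract_eval_terms_scaled[OF bounded, symmetric])
  also have "\<dots> = dotp p \<xi> circ (nmul (p - 1) e) c"
    by (simp add: dotp_eq_lin_extract ec flip: nmul_mult)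
  finally show ?thesis .
qed

lemma bilin_extract_star_circ:
  "bilin_extract (\<lambda>s t. circ (nmul s a) (nmul t b) \<star> c) = dotp p \<xi> circ a (dotp p \<xi> circ b c)"
proof -
  have "lin_extract (\<lambda>t. circ (nmul s a) (nmul t b) \<star> c) =
      nmul s a \<star> dotp p \<xi> circ b c + dotp p \<xi> circ b c" for s
    by (simp add: star_circ_left lin_extract_add lin_extract_const dotp_eq_lin_extract
        additive_lin_extract[OF star_additive])
  then show ?thesis
    by (simp add: bilin_extract_def lin_extract_add lin_extract_const dotp_eq_lin_extract)
qed

text \<open>Write \<open>circ (s a) (t b) = X + V + Z\<close> with \<open>X = s a + t b\<close>, \<open>V = (s t) e\<close> diagonal and
  \<open>Z\<close> non-bilinear; up to non-bilinear terms \<open>(X + V + Z) \<star> c\<close> is \<open>X \<star> c + V \<star> c\<close>.\<close>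

lemma bilin_extract_star_circ_split:
  "bilin_extract (\<lambda>s t. circ (nmul s a) (nmul t b) \<star> c) =
    bilin_extract (\<lambda>s t. (nmul s a + nmul t b) \<star> c) + dotp p \<xi> circ (dotp p \<xi> circ a b) c"
proof -
  obtain e where e: "e \<in> filt 2" and ab: "dotp p \<xi> circ a b = nmul (p - 1) e"
    and Z: "graded_poly 0 1 non_bilinear (\<lambda>s t. nmul s a \<star> nmul t b - nmul (s * t) e)"
    by (rule star_nmul_split)
  define X where "X s t = nmul s a + nmul t b" for s t
  define V where "V s t = nmul (s * t) e" for s t
  define Z' where "Z' s t = nmul s a \<star> nmul t b - nmul (s * t) e" for s t
  have X: "graded_poly 0 1 pos_deg X"
    using graded_poly_add[OF graded_poly_monom[of pos_deg 1 0 a 0 1] graded_poly_monom[of pos_deg 0 1 b 0 1]]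
    unfolding X_def by (simp add: pos_deg_def)
  have V: "graded_poly 0 1 diagonal V"
    using graded_poly_monom[of diagonal 1 1 e 0 1] e unfolding V_def by (simp add: diagonal_def numeral_2_eq_2)
  have "graded_poly 0 1 pos_deg (\<lambda>s t. X s t + V s t)"
    using graded_poly_mono[OF V, of 0 1 pos_deg] by (intro graded_poly_add[OF X]) (simp_all add: diagonal_def pos_deg_def)
  from star_perturb_non_bilinear[OF this Z[folded Z'_def]]
  have 1: "bilin_extract (\<lambda>s t. (X s t + V s t + Z' s t) \<star> c - (X s t + V s t) \<star> c) = 0"
    by (rule bilin_extract_non_bilinear)
  have 2: "bilin_extract (\<lambda>s t. (X s t + V s t) \<star> c - X s t \<star> c - V s t \<star> c) = 0"
    by (rule bilin_extract_non_bilinear[OF star_add_defect_non_bilinear[OF X V]])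
  have "circ (nmul s a) (nmul t b) \<star> c = X s t \<star> c + V s t \<star> c
      + ((X s t + V s t) \<star> c - X s t \<star> c - V s t \<star> c)
      + ((X s t + V s t + Z' s t) \<star> c - (X s t + V s t) \<star> c)" for s t
    by (simp add: circ_eq_add_star X_def V_def Z'_def)
  then have "bilin_extract (\<lambda>s t. circ (nmul s a) (nmul t b) \<star> c) =
      bilin_extract (\<lambda>s t. X s t \<star> c) + bilin_extract (\<lambda>s t. V s t \<star> c)"
    by (simp only: bilin_extract_add 1 2) simp
  then show ?thesis
    by (simp add: X_def V_def ab bilin_extract_nmul_mult_star)
qed

text \<open>Both sides of the identity are \<open>bilin_extract\<close> of \<open>(s a + t b) \<star> c\<close>, which is symmetric in
  \<open>a\<close> and \<open>b\<close>.\<close>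

lemma dotp_pre_Lie:
  "dotp p \<xi> circ (dotp p \<xi> circ a b) c - dotp p \<xi> circ a (dotp p \<xi> circ b c)
   = dotp p \<xi> circ (dotp p \<xi> circ b a) c - dotp p \<xi> circ b (dotp p \<xi> circ a c)"
proof -
  have "dotp p \<xi> circ x (dotp p \<xi> circ y c) - dotp p \<xi> circ (dotp p \<xi> circ x y) c =
      bilin_extract (\<lambda>s t. (nmul s x + nmul t y) \<star> c)" for x y
    using bilin_extract_star_circ[of x y c] bilin_extract_star_circ_split[of x y c]
    by (metis add_diff_cancel_right')
  moreover have "bilin_extract (\<lambda>s t. (nmul s b + nmul t a) \<star> c) =
      bilin_extract (\<lambda>s t. (nmul s a + nmul t b) \<star> c)"
    using bilin_extract_swap[of "\<lambda>s t. (nmul s a + nmul t b) \<star> c"] by (simp add: add.commute)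
  ultimately show ?thesis by (metis minus_diff_eq)
qed

end

theorem theorem5:
  fixes circ :: "'a::{ab_group_add, finite} \<Rightarrow> 'a \<Rightarrow> 'a"
    and p n k \<gamma> \<xi> :: nat
  assumes "prime p" and "p > 2"
    and "brace circ"
    and "strongly_nilpotent circ"
    and "card (UNIV :: 'a set) = p ^ n"
    and "nilpotency_index circ k"
    and "k < p" and "n + 1 < p"
    and "residue_primroot (p ^ p) \<gamma>"
    and "\<xi> = \<gamma> ^ (p ^ (p - 1))"
  shows "\<forall>a b c.
    dotp p \<xi> circ (dotp p \<xi> circ a b) c
      - dotp p \<xi> circ a (dotp p \<xi> circ b c)
    = dotp p \<xi> circ (dotp p \<xi> circ b a) c
      - dotp p \<xi> circ b (dotp p \<xi> circ a c)"
proof -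
  \<comment> \<open>\<open>strongly_nilpotent circ\<close> follows from the nilpotency index and is not needed;
    \<open>n + 1 < p\<close> is only used as \<open>p ^ n dvd p ^ p\<close>.\<close>
  have p0: "p > 0" using assms(2) by simp
  interpret primitive_root_brace circ k "p ^ n" p \<xi>
  proof
    show "brace circ" by (rule assms(3))
    show "sp circ k = {0}" using assms(6) by (simp add: nilpotency_index_def)
    show "nmul (p ^ n) x = 0" for x :: 'a using nmul_card_UNIV[of x] assms(5) by simp
    show "coprime (fact j) (p ^ n)" if "j < k" for j
      using that assms(1,7) by (simp add: coprime_commute prime_imp_coprime prime_dvd_fact_iff)
    show "[(\<Sum>i=0..p-2. \<xi> ^ (p - 1 - i) * (\<xi> ^ i) ^ \<alpha>) = (if \<alpha> = 1 then p - 1 else 0)] (mod p ^ n)"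
      if "\<alpha> \<le> p - 2" for \<alpha>
      unfolding assms(10) using residue_primroot_character_sum_cong[OF assms(1,2) p0 assms(9) that]
      by (rule cong_dvd_modulus_nat) (use assms(8) in \<open>simp add: le_imp_power_dvd\<close>)
  qed (use assms(2,7) p0 in simp_all)
  show ?thesis using dotp_pre_Lie by blast
qed

end
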